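(* Let Assumption 1' hold. For every $c_1,\dots,c_n\in\mathbb{R}$, every $x_0\in\mathbb{R}^{pn}$ and every locally integrable input $u(\cdot)$, consider $\dot x=A_{\mathrm M}x+B_{\mathrm M}u$, $y=C_{\mathrm M}x$, $x(0)=x_0$, together with the filters $\dot\zeta=A_{\mathrm r,m}\zeta+B_{\mathrm r,m}u$, $\zeta(0)=0_{mn,1}$, and $\dot\mu=A_{\mathrm r,p}\mu+B_{\mathrm r,p}y$, $\mu(0)=0_{pn,1}$. Then $\chi=\mathrm{col}(\zeta,\mu)\in\mathbb{R}^{(m+p)n}$ satisfies, for all $t\ge0$, \[\dot\chi(t)=A_{\mathrm M,\mathrm f}\chi(t)+B_{\mathrm M,\mathrm f}u(t)+G_{\mathrm M,\mathrm f}\,\mathrm{e}^{A_{\mathrm r,p}^\top t}x_0,\] and the pair $(A_{\mathrm M,\mathrm f},B_{\mathrm M,\mathrm f})$ is reachable.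
   Context: Fix integers $n,m,p\ge1$ and matrices $A_i\in\mathbb{R}^{p\times p}$, $B_i\in\mathbb{R}^{p\times m}$, $i=1,\dots,n$, defining the MIMO system $y^{(n)}+A_1y^{(n-1)}+\dots+A_ny=B_1u^{(n-1)}+\dots+B_nu$, $y(t)\in\mathbb{R}^p$, $u(t)\in\mathbb{R}^m$. Assumption 1': this input–output system is the input–output description of a reachable and observable state-space system $\dot{\bar x}=\bar A\bar x+\bar Bu$, $y=\bar C\bar x$ of dimension $h=pn$ with $\mathrm{rank}\,\mathrm{col}(\bar C,\bar C\bar A,\dots,\bar C\bar A^{n-1})=h$. Define $C_{\mathrm M}=[0_{p,p(n-1)}\;I_p]$, $A_{\mathrm M}\in\mathbb{R}^{pn\times pn}$ whose first $p(n-1)$ columns are $\begin{bmatrix}0_{p,p(n-1)}\\ I_{p(n-1)}\end{bmatrix}$ and whose last $p$ columns are $\mathrm{col}(-A_n,\dots,-A_1)$, and $B_{\mathrm M}=\mathrm{col}(B_n,\dots,B_1)$. For real $c_1,\dots,c_n$, $A_{\mathrm r}\in\mathbb{R}^{n\times n}$ has first $n-1$ rows $[0_{n-1,1}\;I_{n-1}]$ and last row $(-c_n,\dots,-c_1)$, $B_{\mathrm r}=(0,\dots,0,1)^\top\in\mathbb{R}^n$; $A_{\mathrm r,m}=A_{\mathrm r}\otimes I_m$, $B_{\mathrm r,m}=B_{\mathrm r}\otimes I_m$, $A_{\mathrm r,p}=A_{\mathrm r}\otimes I_p$, $B_{\mathrm r,p}=B_{\mathrm r}\otimes I_p$ ($\otimes$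 the Kronecker product). Define $A_{\mathrm M,\mathrm f}=\begin{bmatrix}A_{\mathrm r,m}&0_{mn,pn}\\ L_{B}&A_{\mathrm c}\end{bmatrix}$, where $L_B\in\mathbb{R}^{pn\times mn}$ has first $(n-1)p$ rows zero and last $p$ rows $[B_n\;\cdots\;B_1]$, and $A_{\mathrm c}\in\mathbb{R}^{pn\times pn}$ has first $(n-1)p$ rows $[0_{(n-1)p,p}\;I_{(n-1)p}]$ and last $p$ rows $[-A_n\;\cdots\;-A_1]$; $B_{\mathrm M,\mathrm f}=\mathrm{col}(B_{\mathrm r,m},0_{pn,m})$; $G_{\mathrm M,\mathrm f}=\mathrm{col}(0_{mn,pn},B_{\mathrm r,p}C_{\mathrm M})$. *)

theory Defs
  imports "HOL-Analysis.Analysis" "Jordan_Normal_Form.DL_Rank"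
begin

definition kron :: "real mat \<Rightarrow> real mat \<Rightarrow> real mat" where
  "kron A B = mat (dim_row A * dim_row B) (dim_col A * dim_col B)
     (\<lambda>(i,j). A $$ (i div dim_row B, j div dim_col B) * B $$ (i mod dim_row B, j mod dim_col B))"

definition mat_exp :: "real mat \<Rightarrow> real \<Rightarrow> real mat" where
  "mat_exp M t = mat (dim_row M) (dim_col M)
     (\<lambda>(i,j). (\<Sum>k. (t ^ k / fact k) * (M ^\<^sub>m k) $$ (i,j)))"

definition mat_rank :: "real mat \<Rightarrow> nat" where
  "mat_rank M = vec_space.rank (dim_row M) M"

definition ctrb_mat :: "real mat \<Rightarrow> real mat \<Rightarrow> real mat" where
  "ctrb_mat A B = mat (dim_row A) (dim_row A * dim_col B)
     (\<lambda>(i,j). (A ^\<^sub>m (j div dim_col B) * B) $$ (i, j mod dim_col B))"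

definition reachable_pair :: "real mat \<Rightarrow> real mat \<Rightarrow> bool" where
  "reachable_pair A B \<longleftrightarrow> A \<in> carrier_mat (dim_row A) (dim_row A) \<and> dim_row B = dim_row A
     \<and> mat_rank (ctrb_mat A B) = dim_row A"

definition obs_mat :: "real mat \<Rightarrow> real mat \<Rightarrow> nat \<Rightarrow> real mat" where
  "obs_mat C A k = mat (dim_row C * k) (dim_col C)
     (\<lambda>(i,j). (C * A ^\<^sub>m (i div dim_row C)) $$ (i mod dim_row C, j))"

text \<open>Coefficients: A i, B i for i = 1..n; c i for i = 1..n.\<close>

definition A_r :: "nat \<Rightarrow> (nat \<Rightarrow> real) \<Rightarrow> real mat" where
  "A_r n c = mat n n (\<lambda>(i,j). if i < n - 1 then (if j = i + 1 then 1 else 0) else - c (n - j))"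

definition B_r :: "nat \<Rightarrow> real mat" where
  "B_r n = mat n 1 (\<lambda>(i,j). if i = n - 1 then 1 else 0)"

definition C_M :: "nat \<Rightarrow> nat \<Rightarrow> real mat" where
  "C_M n p = mat p (p * n) (\<lambda>(i,j). if j = p * (n - 1) + i then 1 else 0)"

definition A_M :: "nat \<Rightarrow> nat \<Rightarrow> (nat \<Rightarrow> real mat) \<Rightarrow> real mat" where
  "A_M n p A = mat (p * n) (p * n) (\<lambda>(i,j).
      if j < p * (n - 1) then (if i = j + p then 1 else 0)
      else - (A (n - i div p)) $$ (i mod p, j - p * (n - 1)))"

definition B_M :: "nat \<Rightarrow> nat \<Rightarrow> nat \<Rightarrow> (nat \<Rightarrow> real mat) \<Rightarrow> real mat" where
  "B_M n m p B = mat (p * n) m (\<lambda>(i,j). (B (n - i div p)) $$ (i mod p, j))"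

definition L_B :: "nat \<Rightarrow> nat \<Rightarrow> nat \<Rightarrow> (nat \<Rightarrow> real mat) \<Rightarrow> real mat" where
  "L_B n m p B = mat (p * n) (m * n) (\<lambda>(i,j).
      if i < (n - 1) * p then 0
      else (B (n - j div m)) $$ (i - (n - 1) * p, j mod m))"

definition A_c :: "nat \<Rightarrow> nat \<Rightarrow> (nat \<Rightarrow> real mat) \<Rightarrow> real mat" where
  "A_c n p A = mat (p * n) (p * n) (\<lambda>(i,j).
      if i < (n - 1) * p then (if j = i + p then 1 else 0)
      else - (A (n - j div p)) $$ (i - (n - 1) * p, j mod p))"

definition A_Mf :: "nat \<Rightarrow> nat \<Rightarrow> nat \<Rightarrow> (nat \<Rightarrow> real mat) \<Rightarrow> (nat \<Rightarrow> real mat)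
    \<Rightarrow> (nat \<Rightarrow> real) \<Rightarrow> real mat" where
  "A_Mf n m p A B c = four_block_mat (kron (A_r n c) (1\<^sub>m m)) (0\<^sub>m (m * n) (p * n))
      (L_B n m p B) (A_c n p A)"

definition B_Mf :: "nat \<Rightarrow> nat \<Rightarrow> nat \<Rightarrow> real mat" where
  "B_Mf n m p = kron (B_r n) (1\<^sub>m m) @\<^sub>r 0\<^sub>m (p * n) m"

definition G_Mf :: "nat \<Rightarrow> nat \<Rightarrow> nat \<Rightarrow> real mat" where
  "G_Mf n m p = 0\<^sub>m (m * n) (p * n) @\<^sub>r (kron (B_r n) (1\<^sub>m p) * C_M n p)"

text \<open>(Abar, Bbar, Cbar) has the given input-output description: eliminating the state from
  y = Cbar x, y' = Cbar Abar x + Cbar Bbar u, ... yields exactly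
  y^(n) + A_1 y^(n-1) + ... + A_n y = B_1 u^(n-1) + ... + B_n u, i.e. the coefficient of x
  vanishes and the coefficient of u^(i) equals B_(n-i).\<close>
definition io_description ::
  "nat \<Rightarrow> nat \<Rightarrow> nat \<Rightarrow> (nat \<Rightarrow> real mat) \<Rightarrow> (nat \<Rightarrow> real mat)
     \<Rightarrow> real mat \<Rightarrow> real mat \<Rightarrow> real mat \<Rightarrow> bool" where
  "io_description n m p A B Abar Bbar Cbar \<longleftrightarrow>
     (\<forall>r<p. \<forall>j<dim_row Abar.
        (Cbar * Abar ^\<^sub>m n) $$ (r,j) + (\<Sum>k=1..n. (A k * Cbar * Abar ^\<^sub>m (n - k)) $$ (r,j)) = 0)
   \<and> (\<forall>i<n. \<forall>r<p. \<forall>j<m.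
        (B (n - i)) $$ (r,j) = (Cbar * Abar ^\<^sub>m (n - 1 - i) * Bbar) $$ (r,j)
           + (\<Sum>k=1..n-1-i. (A k * Cbar * Abar ^\<^sub>m (n - 1 - i - k) * Bbar) $$ (r,j)))"

definition assumption_1' ::
  "nat \<Rightarrow> nat \<Rightarrow> nat \<Rightarrow> (nat \<Rightarrow> real mat) \<Rightarrow> (nat \<Rightarrow> real mat) \<Rightarrow> bool" where
  "assumption_1' n m p A B \<longleftrightarrow>
     (\<exists>Abar Bbar Cbar.
        Abar \<in> carrier_mat (p * n) (p * n) \<and> Bbar \<in> carrier_mat (p * n) m
      \<and> Cbar \<in> carrier_mat p (p * n)
      \<and> io_description n m p A B Abar Bbar Cbar
      \<and> reachable_pair Abar Bbar
      \<and> mat_rank (obs_mat Cbar Abar n) = p * n)"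

definition loc_integrable_input :: "nat \<Rightarrow> (real \<Rightarrow> real vec) \<Rightarrow> bool" where
  "loc_integrable_input m u \<longleftrightarrow>
     (\<forall>t. dim_vec (u t) = m) \<and> (\<forall>i<m. \<forall>t\<ge>0. set_integrable lborel {0..t} (\<lambda>s. u s $ i))"

definition solves_lin_ode ::
  "real mat \<Rightarrow> real mat \<Rightarrow> real vec \<Rightarrow> (real \<Rightarrow> real vec) \<Rightarrow> (real \<Rightarrow> real vec) \<Rightarrow> bool" where
  "solves_lin_ode A B x0 u x \<longleftrightarrow>
     (\<forall>t\<ge>0. dim_vec (x t) = dim_row A) \<and>
     (\<forall>t\<ge>0. \<forall>i<dim_row A.
        set_integrable lborel {0..t} (\<lambda>s. (A *\<^sub>v x s + B *\<^sub>v u s) $ i) \<and>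
        x t $ i = x0 $ i + (LINT s:{0..t}|lborel. (A *\<^sub>v x s + B *\<^sub>v u s) $ i))"

end

(*
  Let w be a row vector orthogonal to the reachability matrix of
  (A_Mf, B_Mf) and follow its orbit w A_Mf^k.  The last block beta of its mu-part
  satisfies the autoregressive recurrence beta(s+n) = - sum_i beta(s+i) A_(n-i), and
  the combinations sum_i beta(s+i) B_(n-i) vanish.  Multiplying beta into the rows of the
  similarity that takes the realization (Abar, Bbar, Cbar) of Assumption 1' to observer
  form gives a row vector orthogonal to every Abar^s Bbar, hence zero by reachability
  of (Abar, Bbar); observability then forces beta = 0 through a triangular system, and
  unrolling the orbit gives w = 0.

  With Bezoutian-type matrices P and Q built from the c_i, A_i and B_i,
  the reduced state x - P zeta - Q mu solves the linear equation with matrix A_r,p^T and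
  initial value x0, so by Picard iteration it equals exp(A_r,p^T t) x0.  The last block
  of x, which drives the mu-filter through C_M, is therefore this exponential term plus
  the rows of L_B zeta and of (A_c - A_r,p) mu, which is the claimed equation.
*)
theory Submission
  imports Defs
begin

unbundle no vec_syntax and no inner_syntax

section \<open>Sums over block indices\<close>

lemma sum_lessThan_mult_blocks:
  fixes g :: "nat \<Rightarrow> 'a::comm_monoid_add"
  shows "(\<Sum>i<n*p. g i) = (\<Sum>b<n. \<Sum>r<p. g (b*p + r))"
proof -
  have shift: "sum g {a..<a+q} = (\<Sum>r<q. g (a + r))" for a q
    by (induct q) auto
  have "(\<Sum>i<n*p. g i) = (\<Sum>b<n. sum g {b*p..<b*p+p})"
    using sum.nat_group[of g p n] by (simp add: lessThan_atLeast0)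
  then show ?thesis by (simp only: shift)
qed

lemma sum_lessThan_add_split:
  fixes g :: "nat \<Rightarrow> 'a::comm_monoid_add"
  shows "(\<Sum>i<a+b. g i) = (\<Sum>i<a. g i) + (\<Sum>i<b. g (a+i))"
  by (induct b) (auto simp: ac_simps)

lemma block_index_less: "b < n \<Longrightarrow> t < (m::nat) \<Longrightarrow> b*m + t < n*m"
proof -
  assume "b < n" "t < m"
  then have "b*m + t < Suc b * m" by simp
  also have "\<dots> \<le> n * m" using \<open>b < n\<close> by (intro mult_le_mono1) simp
  finally show ?thesis .
qed

lemma block_index_less_iff: "r < (p::nat) \<Longrightarrow> b*p + r < q*p \<longleftrightarrow> b < q"
  by (meson block_index_less add_lessD1 mult_less_cancel2)

lemma block_index_eq_iff: "t < (m::nat) \<Longrightarrow> t' < m \<Longrightarrow> b*m + t = b'*m + t' \<longleftrightarrow> b = b' \<and> t = t'"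
proof
  assume "t < m" "t' < m" and e: "b*m + t = b'*m + t'"
  from e have "(b*m + t) div m = (b'*m + t') div m" "(b*m + t) mod m = (b'*m + t') mod m"
    by (simp_all only:)
  with \<open>t < m\<close> \<open>t' < m\<close> show "b = b' \<and> t = t'" by simp
qed simp

lemma sum_lessThan_delta_mult:
  fixes g :: "nat \<Rightarrow> 'a::comm_semiring_1"
  assumes "t < m"
  shows "(\<Sum>t'<m. g t' * (if t' = t then 1 else 0)) = g t"
    and "(\<Sum>t'<m. g t' * (if t = t' then 1 else 0)) = g t"
    and "(\<Sum>t'<m. (if t' = t then 1 else 0) * g t') = g t"
    and "(\<Sum>t'<m. (if t = t' then 1 else 0) * g t') = g t"
  using assms by (simp_all add: mult_if_delta mult.commute[of "g _"])

lemma sum_lessThan_delta_mult2: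
  fixes g :: "nat \<Rightarrow> nat \<Rightarrow> 'a::comm_semiring_1"
  assumes "b < n" "t < q"
  shows "(\<Sum>b'<n. \<Sum>t'<q. (if b' = b \<and> t' = t then 1 else 0) * g b' t') = g b t"
proof -
  have "(\<Sum>t'<q. (if b' = b \<and> t' = t then 1 else 0) * g b' t') = (if b' = b then g b' t else 0)" for b'
    using assms(2) by (cases "b' = b") (simp_all add: mult_if_delta)
  then show ?thesis using assms(1) by simp
qed

lemma sum_swap_mult_right3:
  fixes a :: "nat \<Rightarrow> nat \<Rightarrow> 'a::comm_semiring_1"
  shows "(\<Sum>l<d. (\<Sum>k<K. \<Sum>r<p. a k r * C k r l) * X l) = (\<Sum>k<K. \<Sum>r<p. a k r * (\<Sum>l<d. C k r l * X l))"
proof -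
  have "(\<Sum>l<d. (\<Sum>k<K. \<Sum>r<p. a k r * C k r l) * X l) = (\<Sum>l<d. \<Sum>k<K. \<Sum>r<p. a k r * C k r l * X l)"
    by (simp add: sum_distrib_right)
  also have "\<dots> = (\<Sum>k<K. \<Sum>l<d. \<Sum>r<p. a k r * C k r l * X l)" by (rule sum.swap)
  also have "\<dots> = (\<Sum>k<K. \<Sum>r<p. \<Sum>l<d. a k r * C k r l * X l)" by (rule sum.cong[OF refl]) (rule sum.swap)
  finally show ?thesis by (simp add: sum_distrib_left mult.assoc)
qed

lemma sum_lessThan_reflect_telescope:
  fixes h :: "nat \<Rightarrow> 'a::ab_group_add"
  shows "(\<Sum>i<L. h i - h (L - i)) = h 0 - h L"
proof -
  have "(\<Sum>i<L. h (L - i)) = (\<Sum>i<L. h (Suc (L - Suc i)))"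
    by (intro sum.cong) (auto simp: Suc_diff_Suc)
  also have "\<dots> = (\<Sum>i<L. h (Suc i))"
    by (rule sum.nat_diff_reindex)
  finally have "(\<Sum>i<L. h i - h (L - i)) = (\<Sum>i<L. h i - h (Suc i))"
    by (simp add: sum_subtractf)
  then show ?thesis by (simp only: sum_lessThan_telescope')
qed

lemma index_mult_mat_lessThan:
  fixes X Y :: "'a::comm_ring mat"
  assumes "X \<in> carrier_mat a b" "Y \<in> carrier_mat b c" "i < a" "j < c"
  shows "(X * Y) $$ (i,j) = (\<Sum>l<b. X $$ (i,l) * Y $$ (l,j))"
  using assms by (auto simp: scalar_prod_def atLeast0LessThan intro!: sum.cong)

lemma index_mult_mat_vec_lessThan:
  fixes X :: "'a::comm_ring mat"
  assumes "X \<in> carrier_mat a b" "v \<in> carrier_vec b" "i < a"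
  shows "(X *\<^sub>v v) $ i = (\<Sum>l<b. X $$ (i,l) * v $ l)"
  using assms by (auto simp: scalar_prod_def atLeast0LessThan intro!: sum.cong)

lemma sum_mult_iterate_eq_mat_pow:
  fixes f :: "nat \<Rightarrow> nat \<Rightarrow> real" and M X :: "real mat"
  assumes M: "M \<in> carrier_mat d d"
    and rec: "\<And>k j. j < d \<Longrightarrow> f (Suc k) j = (\<Sum>i<d. f k i * M $$ (i,j))"
    and X: "X \<in> carrier_mat d e" and l: "l < e"
  shows "(\<Sum>i<d. f k i * X $$ (i,l)) = (\<Sum>i<d. f 0 i * (M ^\<^sub>m k * X) $$ (i,l))"
  using X
proof (induct k arbitrary: X)
  case 0
  then show ?case using M by simp
next
  case (Suc k)
  have MX: "M * X \<in> carrier_mat d e" using M Suc.prems by simp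
  have "(\<Sum>i<d. f (Suc k) i * X $$ (i,l)) = (\<Sum>i<d. (\<Sum>j<d. f k j * M $$ (j,i)) * X $$ (i,l))"
    using rec by simp
  also have "\<dots> = (\<Sum>j<d. f k j * (\<Sum>i<d. M $$ (j,i) * X $$ (i,l)))"
    unfolding sum_distrib_left sum_distrib_right mult.assoc by (rule sum.swap)
  also have "\<dots> = (\<Sum>j<d. f k j * (M * X) $$ (j,l))"
    by (rule sum.cong[OF refl], subst index_mult_mat_lessThan[OF M Suc.prems _ l]) auto
  also have "\<dots> = (\<Sum>i<d. f 0 i * (M ^\<^sub>m k * (M * X)) $$ (i,l))"
    using Suc.hyps[OF MX] .
  also have "M ^\<^sub>m k * (M * X) = M ^\<^sub>m Suc k * X"
    using M Suc.prems by (simp add: assoc_mult_mat[symmetric, of _ d d _ d _ e])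
  finally show ?case .
qed

section \<open>Full row rank and the left kernel\<close>

lemma transpose_mult_mat_vec_index_lessThan:
  fixes M :: "real mat"
  assumes "M \<in> carrier_mat N c" "w \<in> carrier_vec N" "j < c"
  shows "(M\<^sup>T *\<^sub>v w) $ j = (\<Sum>i<N. w $ i * M $$ (i,j))"
  using assms by (auto simp: scalar_prod_def atLeast0LessThan mult.commute intro!: sum.cong)

lemma left_kernel_trivial_if_rank_eq_dim_row:
  fixes M :: "real mat"
  assumes M: "M \<in> carrier_mat N c"
    and rk: "vec_space.rank N M = N"
    and w: "w \<in> carrier_vec N"
    and orth: "\<forall>j<c. (\<Sum>i<N. w $ i * M $$ (i,j)) = 0"
  shows "w = 0\<^sub>v N"
proof -
  interpret vec_space "TYPE(real)" N .
  obtain S where S: "maximal S (\<lambda>T. T \<subseteq> set (cols M) \<and> lin_indpt T)"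
    using maximal_exists[of "(\<lambda>T. T \<subseteq> set (cols M) \<and> lin_indpt T)" "card (set (cols M))" "{}"]
    by (meson List.finite_set card_mono empty_iff empty_subsetI finite_lin_indpt2 rev_finite_subset)
  have Ssub: "S \<subseteq> set (cols M)" and Sli: "lin_indpt S" using S unfolding maximal_def by auto
  have colsC: "set (cols M) \<subseteq> carrier V" using cols_dim[of M] carrier_matD(1)[OF M] by simp
  have cardS: "card S = N" using rank_card_indpt[OF M S] rk by simp
  have "basis S"
    by (rule dim_li_is_basis) (use Ssub colsC Sli cardS finite_subset in \<open>auto simp: dim_is_n\<close>)
  then have "span S = carrier V" unfolding basis_def by auto
  moreover have "span (set (cols M)) = {y\<in>carrier_vec N. \<exists>x\<in>carrier_vec c. M *\<^sub>v x = y}"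
    using col_space_eq[OF M] M unfolding col_space_def by simp
  ultimately obtain x where x: "x \<in> carrier_vec c" "M *\<^sub>v x = w"
    using span_is_monotone[OF Ssub] w by auto
  have MTw: "M\<^sup>T *\<^sub>v w = 0\<^sub>v c"
  proof (rule eq_vecI)
    fix j assume "j < dim_vec (0\<^sub>v c :: real vec)"
    then show "(M\<^sup>T *\<^sub>v w) $ j = 0\<^sub>v c $ j"
      using orth transpose_mult_mat_vec_index_lessThan[OF M w] by simp
  qed (use M in simp)
  have "w \<bullet> w = (M\<^sup>T *\<^sub>v w) \<bullet> x"
    using transpose_vec_mult_scalar[OF M x(1) w] x(2) by simp
  also have "\<dots> = 0" unfolding MTw using x by simp
  finally show ?thesis using conjugate_square_eq_0_vec[OF w] by simp
qed

text \<open>The Gram matrix \<^term>\<open>M * M\<^sup>T\<close> is invertible, so every vector lies in the column space of \<^term>\<open>M\<close>.\<close>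
lemma rank_eq_dim_row_if_left_kernel_trivial:
  fixes M :: "real mat"
  assumes M: "M \<in> carrier_mat N c"
    and inj: "\<And>w. w \<in> carrier_vec N \<Longrightarrow> (\<forall>j<c. (\<Sum>i<N. w $ i * M $$ (i,j)) = 0) \<Longrightarrow> w = 0\<^sub>v N"
  shows "vec_space.rank N M = N"
proof -
  interpret vec_space "TYPE(real)" N .
  define G where "G = M * M\<^sup>T"
  have G: "G \<in> carrier_mat N N" using M unfolding G_def by auto
  have "det G \<noteq> 0"
  proof
    assume "det G = 0"
    then obtain v where v: "v \<in> carrier_vec N" "v \<noteq> 0\<^sub>v N" "G *\<^sub>v v = 0\<^sub>v N"
      using det_0_iff_vec_prod_zero_field[OF G] by auto
    have Mv: "M\<^sup>T *\<^sub>v v \<in> carrier_vec c" using M v by auto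
    have "(M\<^sup>T *\<^sub>v v) \<bullet> (M\<^sup>T *\<^sub>v v) = v \<bullet> (G *\<^sub>v v)"
      using transpose_vec_mult_scalar[OF M Mv v(1)] M v unfolding G_def by simp
    then have "M\<^sup>T *\<^sub>v v = 0\<^sub>v c"
      using v conjugate_square_eq_0_vec[OF Mv] by simp
    then have "\<forall>j<c. (\<Sum>i<N. v $ i * M $$ (i,j)) = 0"
      using M v by (metis index_zero_vec(1) transpose_mult_mat_vec_index_lessThan)
    with inj v show False by blast
  qed
  then have "G \<in> Units (ring_mat TYPE(real) N ())" by (rule det_non_zero_imp_unit[OF G])
  then obtain Gi where Gi: "Gi \<in> carrier_mat N N" "G * Gi = 1\<^sub>m N"
    unfolding Units_def ring_mat_def by auto
  have cs: "span (set (cols M)) = {y\<in>carrier_vec N. \<exists>x\<in>carrier_vec c. M *\<^sub>v x = y}"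
    using col_space_eq[OF M] M unfolding col_space_def by simp
  have "carrier V \<subseteq> span (set (cols M))"
  proof
    fix y :: "real vec" assume "y \<in> carrier V"
    then have y: "y \<in> carrier_vec N" by simp
    have Gy: "Gi *\<^sub>v y \<in> carrier_vec N" using Gi y by simp
    have "M *\<^sub>v (M\<^sup>T *\<^sub>v (Gi *\<^sub>v y)) = G *\<^sub>v (Gi *\<^sub>v y)"
      using M Gy unfolding G_def by simp
    also have "\<dots> = (G * Gi) *\<^sub>v y" by (rule assoc_mult_mat_vec[symmetric, OF G Gi(1) y])
    finally have "M *\<^sub>v (M\<^sup>T *\<^sub>v (Gi *\<^sub>v y)) = y" using Gi y by simp
    moreover have "M\<^sup>T *\<^sub>v (Gi *\<^sub>v y) \<in> carrier_vec c" using M Gy by simp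
    ultimately show "y \<in> span (set (cols M))" using cs y by blast
  qed
  then have "span (set (cols M)) = carrier V" using cs by auto
  moreover have "vs (carrier V) = V" by simp
  ultimately show ?thesis unfolding rank_def by (simp only: dim_is_n)
qed

section \<open>Entries and actions of the matrices of the paper\<close>

lemma A_Mf_carrier_mat: "A_Mf n m p A B c \<in> carrier_mat (n*m + p*n) (n*m + p*n)"
  unfolding A_Mf_def kron_def A_r_def A_c_def by auto

lemma kron_index:
  assumes "X \<in> carrier_mat a b" "Y \<in> carrier_mat c d" "i < a" "k < c" "j < b" "l < d"
  shows "kron X Y $$ (i*c+k, j*d+l) = X $$ (i,j) * Y $$ (k,l)"
  using assms block_index_less[of i a k c] block_index_less[of j b l d] unfolding kron_def by simp

lemma kron_carrier_mat: "X \<in> carrier_mat a b \<Longrightarrow> Y \<in> carrier_mat c d \<Longrightarrow> kron X Y \<in> carrier_mat (a*c) (b*d)"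
  unfolding kron_def by auto

lemma A_r_index: "b' < n \<Longrightarrow> b < n \<Longrightarrow> A_r n c $$ (b',b) = (if b' < n - 1 then (if b = b'+1 then 1 else 0) else - c (n-b))"
  unfolding A_r_def by simp

lemma A_r_carrier_mat: "A_r n c \<in> carrier_mat n n" unfolding A_r_def by simp
lemma B_r_carrier_mat: "B_r n \<in> carrier_mat n 1" unfolding B_r_def by simp

lemma sum_mult_A_r_col:
  fixes g :: "nat \<Rightarrow> real"
  assumes "b < n"
  shows "(\<Sum>b'<n. g b' * A_r n c $$ (b',b)) = (if 1 \<le> b then g (b-1) else 0) - c (n-b) * g (n-1)"
proof -
  obtain n1 where n: "n = Suc n1" using assms by (cases n) auto
  have "(\<Sum>b'<n. g b' * A_r n c $$ (b',b)) = (\<Sum>b'<n1. g b' * (if b = b'+1 then 1 else 0)) - c (n-b) * g n1"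
    using assms unfolding n by (simp add: A_r_index)
  also have "(\<Sum>b'<n1. g b' * (if b = b'+1 then 1 else 0)) = (if 1 \<le> b then g (b-1) else 0)"
  proof (cases b)
    case 0 then show ?thesis by simp
  next
    case (Suc b1)
    then have "b1 < n1" using assms n by simp
    then show ?thesis using Suc sum_lessThan_delta_mult(2)[of b1 n1 g] by simp
  qed
  finally show ?thesis using n by simp
qed

lemma B_Mf_carrier_mat: "B_Mf n m p \<in> carrier_mat (n*m + p*n) m"
  unfolding B_Mf_def kron_def B_r_def by (auto simp: append_rows_def)

lemma sum_mult_A_Mf_col_zeta:
  fixes f :: "nat \<Rightarrow> real"
  assumes b: "b < n" and t: "t < m"
  shows "(\<Sum>i<n*m+p*n. f i * A_Mf n m p A B c $$ (i, b*m+t)) =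
     (if 1 \<le> b then f ((b-1)*m+t) else 0) - c (n-b) * f ((n-1)*m+t)
     + (\<Sum>r<p. f (n*m + (n-1)*p + r) * B (n-b) $$ (r,t))"
proof -
  obtain n1 where n: "n = Suc n1" using b by (cases n) auto
  have j: "b*m+t < n*m" using block_index_less[OF b t] .
  let ?K = "kron (A_r n c) (1\<^sub>m m)"
  have K: "?K \<in> carrier_mat (n*m) (n*m)" using kron_carrier_mat[OF A_r_carrier_mat, of "1\<^sub>m m" m m] by simp
  have dL: "dim_row (L_B n m p B) = p*n" "dim_col (L_B n m p B) = m*n" unfolding L_B_def by auto
  have dC: "dim_row (A_c n p A) = p*n" "dim_col (A_c n p A) = p*n" unfolding A_c_def by auto
  have "(\<Sum>i<n*m+p*n. f i * A_Mf n m p A B c $$ (i, b*m+t)) =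
       (\<Sum>i<n*m. f i * A_Mf n m p A B c $$ (i, b*m+t)) + (\<Sum>i<p*n. f (n*m+i) * A_Mf n m p A B c $$ (n*m+i, b*m+t))"
    by (rule sum_lessThan_add_split)
  also have "(\<Sum>i<n*m. f i * A_Mf n m p A B c $$ (i, b*m+t)) = (\<Sum>i<n*m. f i * ?K $$ (i, b*m+t))"
    using j K dC unfolding A_Mf_def by (intro sum.cong refl) simp
  also have "\<dots> = (\<Sum>b'<n. \<Sum>t'<m. f (b'*m+t') * ?K $$ (b'*m+t', b*m+t))" by (rule sum_lessThan_mult_blocks)
  also have "\<dots> = (\<Sum>b'<n. \<Sum>t'<m. f (b'*m+t') * (A_r n c $$ (b',b) * (if t' = t then 1 else 0)))"
    using b t by (intro sum.cong refl) (simp add: kron_index[OF A_r_carrier_mat, of "1\<^sub>m m" m m])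
  also have "\<dots> = (\<Sum>b'<n. f (b'*m+t) * A_r n c $$ (b',b))"
  proof (rule sum.cong[OF refl])
    fix b' show "(\<Sum>t'<m. f (b'*m+t') * (A_r n c $$ (b',b) * (if t' = t then 1 else 0))) = f (b'*m+t) * A_r n c $$ (b',b)"
      using sum_lessThan_delta_mult(1)[OF t, of "\<lambda>t'. f (b'*m+t') * A_r n c $$ (b',b)"] by (simp add: mult.assoc)
  qed
  also have "\<dots> = (if 1 \<le> b then f ((b-1)*m+t) else 0) - c (n-b) * f ((n-1)*m+t)"
    by (rule sum_mult_A_r_col[OF b])
  also have "(\<Sum>i<p*n. f (n*m+i) * A_Mf n m p A B c $$ (n*m+i, b*m+t)) = (\<Sum>i<n*p. f (n*m+i) * L_B n m p B $$ (i, b*m+t))"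
    using j K dC dL unfolding A_Mf_def by (intro sum.cong refl) (auto simp: mult.commute)
  also have "\<dots> = (\<Sum>b'<n. \<Sum>r<p. f (n*m+(b'*p+r)) * L_B n m p B $$ (b'*p+r, b*m+t))" by (rule sum_lessThan_mult_blocks)
  also have "\<dots> = (\<Sum>b'<n. \<Sum>r<p. f (n*m+(b'*p+r)) * (if b' < n-1 then 0 else B (n-b) $$ (r, t)))"
  proof (intro sum.cong refl)
    fix b' r assume b': "b' \<in> {..<n}" and r: "r \<in> {..<p}"
    have i: "b'*p+r < p*n" using block_index_less[of b' n r p] b' r by (simp add: mult.commute)
    have j': "b*m+t < m*n" using j by (simp add: mult.commute)
    have e: "\<not> b' < n - 1 \<Longrightarrow> b'*p + r - (n-1)*p = r" using b' by (subgoal_tac "b' = n-1") auto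
    show "f (n*m+(b'*p+r)) * L_B n m p B $$ (b'*p+r, b*m+t) = f (n*m+(b'*p+r)) * (if b' < n-1 then 0 else B (n-b) $$ (r, t))"
      using i j' b' r t block_index_less_iff[of r p b' "n-1"] e unfolding L_B_def
      by (auto simp: mult.commute[of "n-1" p])
  qed
  also have "\<dots> = (\<Sum>r<p. f (n*m + (n-1)*p + r) * B (n-b) $$ (r,t))"
    unfolding n by (simp add: ac_simps)
  finally show ?thesis .
qed

lemma sum_mult_A_Mf_col_mu:
  fixes f :: "nat \<Rightarrow> real"
  assumes b: "b < n" and r: "r < p"
  shows "(\<Sum>i<n*m+p*n. f i * A_Mf n m p A B c $$ (i, n*m+(b*p+r))) =
     (if 1 \<le> b then f (n*m+((b-1)*p+r)) else 0) - (\<Sum>r'<p. f (n*m + ((n-1)*p + r')) * A (n-b) $$ (r',r))"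
proof -
  obtain n1 where n: "n = Suc n1" using b by (cases n) auto
  have j: "b*p+r < p*n" using block_index_less[OF b r] by (simp add: mult.commute)
  let ?K = "kron (A_r n c) (1\<^sub>m m)"
  have K: "?K \<in> carrier_mat (n*m) (n*m)" using kron_carrier_mat[OF A_r_carrier_mat, of "1\<^sub>m m" m m] by simp
  have dL: "dim_row (L_B n m p B) = p*n" "dim_col (L_B n m p B) = m*n" unfolding L_B_def by auto
  have dC: "dim_row (A_c n p A) = p*n" "dim_col (A_c n p A) = p*n" unfolding A_c_def by auto
  have "(\<Sum>i<n*m+p*n. f i * A_Mf n m p A B c $$ (i, n*m+(b*p+r))) =
       (\<Sum>i<n*m. f i * A_Mf n m p A B c $$ (i, n*m+(b*p+r))) + (\<Sum>i<p*n. f (n*m+i) * A_Mf n m p A B c $$ (n*m+i, n*m+(b*p+r)))"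
    by (rule sum_lessThan_add_split)
  also have "(\<Sum>i<n*m. f i * A_Mf n m p A B c $$ (i, n*m+(b*p+r))) = 0"
    using j K dC unfolding A_Mf_def by (intro sum.neutral) (auto simp: mult.commute[of m n])
  also have "(\<Sum>i<p*n. f (n*m+i) * A_Mf n m p A B c $$ (n*m+i, n*m+(b*p+r))) = (\<Sum>i<n*p. f (n*m+i) * A_c n p A $$ (i, b*p+r))"
    using j K dC dL unfolding A_Mf_def by (intro sum.cong refl) (auto simp: mult.commute)
  also have "\<dots> = (\<Sum>b'<n. \<Sum>r'<p. f (n*m+(b'*p+r')) * A_c n p A $$ (b'*p+r', b*p+r))" by (rule sum_lessThan_mult_blocks)
  also have "\<dots> = (\<Sum>b'<n. \<Sum>r'<p. f (n*m+(b'*p+r')) *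
       (if b' < n-1 then (if b = b'+1 \<and> r = r' then 1 else 0) else - A (n-b) $$ (r', r)))"
  proof (intro sum.cong refl)
    fix b' r' assume b': "b' \<in> {..<n}" and r': "r' \<in> {..<p}"
    have i: "b'*p+r' < p*n" using block_index_less[of b' n r' p] b' r' by (simp add: mult.commute)
    have e: "\<not> b' < n - 1 \<Longrightarrow> b'*p + r' - (n-1)*p = r'" using b' by (subgoal_tac "b' = n-1") auto
    have e2: "(b*p+r = b'*p+r'+p) = (b = b'+1 \<and> r = r')"
      using block_index_eq_iff[of r p r' b "b'+1"] r r' by (simp add: ac_simps)
    show "f (n*m+(b'*p+r')) * A_c n p A $$ (b'*p+r', b*p+r) = f (n*m+(b'*p+r')) *
       (if b' < n-1 then (if b = b'+1 \<and> r = r' then 1 else 0) else - A (n-b) $$ (r', r))"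
      using i j b' r r' block_index_less_iff[of r' p b' "n-1"] e e2 unfolding A_c_def
      by (auto simp: mult.commute[of "n-1" p])
  qed
  also have "\<dots> = (\<Sum>b'<n1. \<Sum>r'<p. f (n*m+(b'*p+r')) * (if b = b'+1 \<and> r = r' then 1 else 0))
      - (\<Sum>r'<p. f (n*m + ((n-1)*p + r')) * A (n-b) $$ (r',r))"
    unfolding n by (simp add: sum_negf)
  also have "(\<Sum>b'<n1. \<Sum>r'<p. f (n*m+(b'*p+r')) * (if b = b'+1 \<and> r = r' then 1 else 0))
     = (\<Sum>b'<n1. f (n*m+(b'*p+r)) * (if b = b'+1 then 1 else 0))"
  proof (rule sum.cong[OF refl])
    fix b' show "(\<Sum>r'<p. f (n*m+(b'*p+r')) * (if b = b'+1 \<and> r = r' then 1 else 0)) = f (n*m+(b'*p+r)) * (if b = b'+1 then 1 else 0)"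
      using sum_lessThan_delta_mult(2)[OF r, of "\<lambda>r'. f (n*m+(b'*p+r')) * (if b = b'+1 then 1 else 0)"]
      by (simp add: if_distrib[of "\<lambda>x. _ * x"] cong: if_cong) (smt (verit) sum.cong)
  qed
  also have "\<dots> = (if 1 \<le> b then f (n*m+((b-1)*p+r)) else 0)"
  proof (cases b)
    case 0 then show ?thesis by simp
  next
    case (Suc b1)
    then have "b1 < n1" using b n by simp
    then show ?thesis using Suc sum_lessThan_delta_mult(2)[of b1 n1 "\<lambda>b'. f (n*m+(b'*p+r))"] by simp
  qed
  finally show ?thesis by simp
qed

lemma B_r_index: "b' < n \<Longrightarrow> B_r n $$ (b', 0) = (if b' = n-1 then 1 else 0)"
  unfolding B_r_def by simp

lemma sum_mult_B_Mf_col: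
  fixes f :: "nat \<Rightarrow> real"
  assumes n: "n \<ge> 1" and l: "l < m"
  shows "(\<Sum>i<n*m+p*n. f i * B_Mf n m p $$ (i, l)) = f ((n-1)*m + l)"
proof -
  let ?K = "kron (B_r n) (1\<^sub>m m)"
  have K: "?K \<in> carrier_mat (n*m) (1*m)" using kron_carrier_mat[OF B_r_carrier_mat, of "1\<^sub>m m" m m] by simp
  have "(\<Sum>i<n*m+p*n. f i * B_Mf n m p $$ (i, l)) =
       (\<Sum>i<n*m. f i * B_Mf n m p $$ (i, l)) + (\<Sum>i<p*n. f (n*m+i) * B_Mf n m p $$ (n*m+i, l))"
    by (rule sum_lessThan_add_split)
  also have "(\<Sum>i<p*n. f (n*m+i) * B_Mf n m p $$ (n*m+i, l)) = 0"
    using K l unfolding B_Mf_def append_rows_def by (intro sum.neutral) auto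
  also have "(\<Sum>i<n*m. f i * B_Mf n m p $$ (i, l)) = (\<Sum>i<n*m. f i * ?K $$ (i, 0*m+l))"
    using K l unfolding B_Mf_def append_rows_def by (intro sum.cong refl) auto
  also have "\<dots> = (\<Sum>b'<n. \<Sum>t'<m. f (b'*m+t') * ?K $$ (b'*m+t', 0*m+l))" by (rule sum_lessThan_mult_blocks)
  also have "\<dots> = (\<Sum>b'<n. \<Sum>t'<m. f (b'*m+t') * ((if b' = n-1 then 1 else 0) * (if t' = l then 1 else 0)))"
  proof (intro sum.cong refl)
    fix b' t' assume "b' \<in> {..<n}" "t' \<in> {..<m}"
    then show "f (b'*m+t') * ?K $$ (b'*m+t', 0*m+l) = f (b'*m+t') * ((if b' = n-1 then 1 else 0) * (if t' = l then 1 else 0))"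
      using kron_index[where X="B_r n" and Y="1\<^sub>m m" and a=n and b=1 and c=m and d=m and i=b' and k=t' and j=0 and l=l]
        l B_r_index[of b' n] B_r_carrier_mat[of n] by simp
  qed
  also have "\<dots> = (\<Sum>b'<n. f (b'*m+l) * (if b' = n-1 then 1 else 0))"
  proof (rule sum.cong[OF refl])
    fix b' show "(\<Sum>t'<m. f (b'*m+t') * ((if b' = n-1 then 1 else 0) * (if t' = l then 1 else 0))) = f (b'*m+l) * (if b' = n-1 then 1 else 0)"
      using sum_lessThan_delta_mult(1)[OF l, of "\<lambda>t'. f (b'*m+t') * (if b' = n-1 then 1 else 0)"] by (simp add: mult.assoc)
  qed
  also have "\<dots> = f ((n-1)*m + l)" using n sum_lessThan_delta_mult(1)[of "n-1" n "\<lambda>b'. f (b'*m+l)"] by simp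
  finally show ?thesis by simp
qed

lemma A_M_carrier_mat: "A_M n p A \<in> carrier_mat (p*n) (p*n)" unfolding A_M_def by simp
lemma B_M_carrier_mat: "B_M n m p B \<in> carrier_mat (p*n) m" unfolding B_M_def by simp
lemma C_M_carrier_mat: "C_M n p \<in> carrier_mat p (p*n)" unfolding C_M_def by simp
lemma L_B_carrier_mat: "L_B n m p B \<in> carrier_mat (p*n) (m*n)" unfolding L_B_def by simp
lemma A_c_carrier_mat: "A_c n p A \<in> carrier_mat (p*n) (p*n)" unfolding A_c_def by simp
lemma kron_A_r_carrier_mat: "kron (A_r n c) (1\<^sub>m q) \<in> carrier_mat (n*q) (n*q)"
  using kron_carrier_mat[OF A_r_carrier_mat, of "1\<^sub>m q" q q n c] by simp
lemma kron_B_r_carrier_mat: "kron (B_r n) (1\<^sub>m q) \<in> carrier_mat (n*q) q"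
  using kron_carrier_mat[OF B_r_carrier_mat, of "1\<^sub>m q" q q n] by simp

lemma A_M_mult_vec_block:
  fixes x :: "real vec"
  assumes x: "x \<in> carrier_vec (p*n)" and k: "k < n" and r: "r < p"
  shows "(A_M n p A *\<^sub>v x) $ (k*p+r) = (if 1 \<le> k then x $ ((k-1)*p+r) else 0) - (\<Sum>r'<p. A (n-k) $$ (r,r') * x $ ((n-1)*p+r'))"
proof -
  obtain n1 where n: "n = Suc n1" using k by (cases n) auto
  have i: "k*p+r < p*n" using block_index_less[OF k r] by (simp add: mult.commute)
  have "(A_M n p A *\<^sub>v x) $ (k*p+r) = (\<Sum>l<p*n. A_M n p A $$ (k*p+r, l) * x $ l)"
    by (rule index_mult_mat_vec_lessThan[OF A_M_carrier_mat x i])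
  also have "\<dots> = (\<Sum>l<n*p. A_M n p A $$ (k*p+r, l) * x $ l)" by (simp add: mult.commute)
  also have "\<dots> = (\<Sum>b<n. \<Sum>r'<p. A_M n p A $$ (k*p+r, b*p+r') * x $ (b*p+r'))" by (rule sum_lessThan_mult_blocks)
  also have "\<dots> = (\<Sum>b<n. \<Sum>r'<p. (if b < n-1 then (if k = b+1 \<and> r = r' then 1 else 0) else - A (n-k) $$ (r, r')) * x $ (b*p+r'))"
  proof (intro sum.cong refl)
    fix b r' assume b: "b \<in> {..<n}" and r': "r' \<in> {..<p}"
    have j: "b*p+r' < p*n" using block_index_less[of b n r' p] b r' by (simp add: mult.commute)
    have e: "\<not> b < n - 1 \<Longrightarrow> b*p + r' - p*(n-1) = r'" using b by (subgoal_tac "b = n-1") (auto simp: mult.commute)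
    have e2: "(k*p+r = b*p+r'+p) = (k = b+1 \<and> r = r')"
      using block_index_eq_iff[of r p r' k "b+1"] r r' by (simp add: ac_simps)
    have e3: "(b*p + r' < p*(n-1)) = (b < n-1)" using block_index_less_iff[of r' p b "n-1"] r' by (simp add: mult.commute)
    show "A_M n p A $$ (k*p+r, b*p+r') * x $ (b*p+r') = (if b < n-1 then (if k = b+1 \<and> r = r' then 1 else 0) else - A (n-k) $$ (r, r')) * x $ (b*p+r')"
      using i j e e2 e3 r unfolding A_M_def by simp
  qed
  also have "\<dots> = (\<Sum>b<n1. \<Sum>r'<p. (if k = b+1 \<and> r = r' then 1 else 0) * x $ (b*p+r')) - (\<Sum>r'<p. A (n-k) $$ (r,r') * x $ ((n-1)*p+r'))"
    unfolding n by (simp add: sum_negf)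
  also have "(\<Sum>b<n1. \<Sum>r'<p. (if k = b+1 \<and> r = r' then 1 else 0) * x $ (b*p+r')) = (if 1 \<le> k then x $ ((k-1)*p+r) else 0)"
  proof (cases k)
    case 0 then show ?thesis by simp
  next
    case (Suc k1)
    then have k1: "k1 < n1" using k n by simp
    have "(\<Sum>b<n1. \<Sum>r'<p. (if k = b+1 \<and> r = r' then 1 else 0) * x $ (b*p+r')) = (\<Sum>b<n1. \<Sum>r'<p. (if b = k1 \<and> r' = r then 1 else 0) * x $ (b*p+r'))"
      using Suc by (intro sum.cong refl) auto
    also have "\<dots> = x $ (k1*p+r)" by (rule sum_lessThan_delta_mult2[OF k1 r])
    finally show ?thesis using Suc by simp
  qed
  finally show ?thesis .
qed

lemma B_M_mult_vec_block:
  fixes u :: "real vec"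
  assumes u: "u \<in> carrier_vec m" and k: "k < n" and r: "r < p"
  shows "(B_M n m p B *\<^sub>v u) $ (k*p+r) = (\<Sum>t<m. B (n-k) $$ (r,t) * u $ t)"
proof -
  have i: "k*p+r < p*n" using block_index_less[OF k r] by (simp add: mult.commute)
  show ?thesis using index_mult_mat_vec_lessThan[OF B_M_carrier_mat u i] i r unfolding B_M_def by simp
qed

lemma C_M_mult_vec:
  fixes x :: "real vec"
  assumes x: "x \<in> carrier_vec (p*n)" and r: "r < p" and n1: "n \<ge> 1"
  shows "(C_M n p *\<^sub>v x) $ r = x $ ((n-1)*p+r)"
proof -
  have j: "(n-1)*p+r < p*n" using block_index_less[of "n-1" n r p] r n1 by (simp add: mult.commute)
  have "(C_M n p *\<^sub>v x) $ r = (\<Sum>l<p*n. C_M n p $$ (r,l) * x $ l)" by (rule index_mult_mat_vec_lessThan[OF C_M_carrier_mat x r])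
  also have "\<dots> = (\<Sum>l<p*n. (if l = (n-1)*p+r then 1 else 0) * x $ l)"
    using r unfolding C_M_def by (intro sum.cong refl) (auto simp: mult.commute)
  also have "\<dots> = x $ ((n-1)*p+r)" using sum_lessThan_delta_mult(3)[OF j, of "\<lambda>l. x $ l"] .
  finally show ?thesis .
qed

lemma kron_A_r_mult_vec_block:
  fixes v :: "real vec"
  assumes v: "v \<in> carrier_vec (n*q)" and b: "b < n" and t: "t < q"
  shows "(kron (A_r n c) (1\<^sub>m q) *\<^sub>v v) $ (b*q+t) =
     (if b < n-1 then v $ ((b+1)*q+t) else - (\<Sum>b'<n. c (n-b') * v $ (b'*q+t)))"
proof -
  have i: "b*q+t < n*q" using block_index_less[OF b t] .
  have "(kron (A_r n c) (1\<^sub>m q) *\<^sub>v v) $ (b*q+t) = (\<Sum>l<n*q. kron (A_r n c) (1\<^sub>m q) $$ (b*q+t, l) * v $ l)"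
    by (rule index_mult_mat_vec_lessThan[OF kron_A_r_carrier_mat v i])
  also have "\<dots> = (\<Sum>b'<n. \<Sum>t'<q. kron (A_r n c) (1\<^sub>m q) $$ (b*q+t, b'*q+t') * v $ (b'*q+t'))" by (rule sum_lessThan_mult_blocks)
  also have "\<dots> = (\<Sum>b'<n. \<Sum>t'<q. (A_r n c $$ (b,b') * (if t = t' then 1 else 0)) * v $ (b'*q+t'))"
  proof (intro sum.cong refl)
    fix b' t' assume "b' \<in> {..<n}" "t' \<in> {..<q}"
    then show "kron (A_r n c) (1\<^sub>m q) $$ (b*q+t, b'*q+t') * v $ (b'*q+t') = (A_r n c $$ (b,b') * (if t = t' then 1 else 0)) * v $ (b'*q+t')"
      using kron_index[where X="A_r n c" and Y="1\<^sub>m q" and a=n and b=n and c=q and d=q and i=b and k=t and j=b' and l=t'] A_r_carrier_mat[of n c] b t by simp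
  qed
  also have "\<dots> = (\<Sum>b'<n. A_r n c $$ (b,b') * v $ (b'*q+t))"
  proof (rule sum.cong[OF refl])
    fix b' show "(\<Sum>t'<q. (A_r n c $$ (b,b') * (if t = t' then 1 else 0)) * v $ (b'*q+t')) = A_r n c $$ (b,b') * v $ (b'*q+t)"
      using sum_lessThan_delta_mult(4)[OF t, of "\<lambda>t'. A_r n c $$ (b,b') * v $ (b'*q+t')"] by (simp add: ac_simps)
  qed
  also have "\<dots> = (if b < n-1 then v $ ((b+1)*q+t) else - (\<Sum>b'<n. c (n-b') * v $ (b'*q+t)))"
  proof (cases "b < n-1")
    case True
    have "(\<Sum>b'<n. A_r n c $$ (b,b') * v $ (b'*q+t)) = (\<Sum>b'<n. (if b' = b+1 then 1 else 0) * v $ (b'*q+t))"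
      using True b by (intro sum.cong refl) (simp add: A_r_index)
    also have "\<dots> = v $ ((b+1)*q+t)" using sum_lessThan_delta_mult(3)[of "b+1" n "\<lambda>b'. v $ (b'*q+t)"] True by simp
    finally show ?thesis using True by simp
  next
    case False
    have "(\<Sum>b'<n. A_r n c $$ (b,b') * v $ (b'*q+t)) = (\<Sum>b'<n. - (c (n-b') * v $ (b'*q+t)))"
      using False b by (intro sum.cong refl) (simp add: A_r_index)
    then show ?thesis using False by (simp add: sum_negf)
  qed
  finally show ?thesis .
qed

lemma kron_B_r_mult_vec_block:
  fixes w :: "real vec"
  assumes w: "w \<in> carrier_vec q" and b: "b < n" and t: "t < q"
  shows "(kron (B_r n) (1\<^sub>m q) *\<^sub>v w) $ (b*q+t) = (if b = n-1 then w $ t else 0)"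
proof -
  have i: "b*q+t < n*q" using block_index_less[OF b t] .
  have "(kron (B_r n) (1\<^sub>m q) *\<^sub>v w) $ (b*q+t) = (\<Sum>l<q. kron (B_r n) (1\<^sub>m q) $$ (b*q+t, l) * w $ l)"
    by (rule index_mult_mat_vec_lessThan[OF kron_B_r_carrier_mat w i])
  also have "\<dots> = (\<Sum>l<q. ((if b = n-1 then 1 else 0) * (if t = l then 1 else 0)) * w $ l)"
  proof (intro sum.cong refl)
    fix l assume l: "l \<in> {..<q}"
    then show "kron (B_r n) (1\<^sub>m q) $$ (b*q+t, l) * w $ l = ((if b = n-1 then 1 else 0) * (if t = l then 1 else 0)) * w $ l"
      using kron_index[where X="B_r n" and Y="1\<^sub>m q" and a=n and b=1 and c=q and d=q and i=b and k=t and j=0 and l=l]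
        B_r_carrier_mat[of n] B_r_index[OF b] b t by simp
  qed
  also have "\<dots> = (if b = n-1 then w $ t else 0)"
    using sum_lessThan_delta_mult(4)[OF t, of "\<lambda>l. w $ l"] by (simp add: mult.assoc)
  finally show ?thesis .
qed

lemma sum_transpose_kron_A_r_row:
  fixes y :: "nat \<Rightarrow> real"
  assumes k: "k < n" and r: "r < p"
  shows "(\<Sum>l<p*n. transpose_mat (kron (A_r n c) (1\<^sub>m p)) $$ (k*p+r, l) * y l)
       = (if 1 \<le> k then y ((k-1)*p+r) else 0) - c (n-k) * y ((n-1)*p+r)"
proof -
  have i: "k*p+r < n*p" using block_index_less[OF k r] .
  have "(\<Sum>l<p*n. transpose_mat (kron (A_r n c) (1\<^sub>m p)) $$ (k*p+r, l) * y l)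
     = (\<Sum>l<n*p. transpose_mat (kron (A_r n c) (1\<^sub>m p)) $$ (k*p+r, l) * y l)" by (simp add: mult.commute)
  also have "\<dots> = (\<Sum>b<n. \<Sum>r'<p. transpose_mat (kron (A_r n c) (1\<^sub>m p)) $$ (k*p+r, b*p+r') * y (b*p+r'))" by (rule sum_lessThan_mult_blocks)
  also have "\<dots> = (\<Sum>b<n. \<Sum>r'<p. (A_r n c $$ (b,k) * (if r' = r then 1 else 0)) * y (b*p+r'))"
  proof (intro sum.cong refl)
    fix b r' assume b: "b \<in> {..<n}" and r': "r' \<in> {..<p}"
    have j: "b*p+r' < n*p" using block_index_less[of b n r' p] b r' by simp
    show "transpose_mat (kron (A_r n c) (1\<^sub>m p)) $$ (k*p+r, b*p+r') * y (b*p+r') = (A_r n c $$ (b,k) * (if r' = r then 1 else 0)) * y (b*p+r')"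
      using kron_A_r_carrier_mat[of n c p] i j
        kron_index[where X="A_r n c" and Y="1\<^sub>m p" and a=n and b=n and c=p and d=p and i=b and k=r' and j=k and l=r]
        A_r_carrier_mat[of n c] b r' k r by simp
  qed
  also have "\<dots> = (\<Sum>b<n. y (b*p+r) * A_r n c $$ (b,k))"
  proof (rule sum.cong[OF refl])
    fix b show "(\<Sum>r'<p. (A_r n c $$ (b,k) * (if r' = r then 1 else 0)) * y (b*p+r')) = y (b*p+r) * A_r n c $$ (b,k)"
      using sum_lessThan_delta_mult(3)[OF r, of "\<lambda>r'. A_r n c $$ (b,k) * y (b*p+r')"] by (simp add: ac_simps)
  qed
  also have "\<dots> = (if 1 \<le> k then y ((k-1)*p+r) else 0) - c (n-k) * y ((n-1)*p+r)"
    by (rule sum_mult_A_r_col[OF k])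
  finally show ?thesis .
qed

lemma A_Mf_mult_append_vec_upper:
  fixes z w :: "real vec"
  assumes z: "z \<in> carrier_vec (n*m)" and w: "w \<in> carrier_vec (p*n)" and i: "i < n*m"
  shows "(A_Mf n m p A B c *\<^sub>v (z @\<^sub>v w)) $ i = (kron (A_r n c) (1\<^sub>m m) *\<^sub>v z) $ i"
proof -
  have zw: "z @\<^sub>v w \<in> carrier_vec (n*m+p*n)" using z w by simp
  have iN: "i < n*m+p*n" using i by simp
  have "(A_Mf n m p A B c *\<^sub>v (z @\<^sub>v w)) $ i = (\<Sum>l<n*m+p*n. A_Mf n m p A B c $$ (i,l) * (z @\<^sub>v w) $ l)"
    by (rule index_mult_mat_vec_lessThan[OF A_Mf_carrier_mat zw iN])
  also have "\<dots> = (\<Sum>l<n*m. A_Mf n m p A B c $$ (i,l) * (z @\<^sub>v w) $ l) + (\<Sum>l<p*n. A_Mf n m p A B c $$ (i,n*m+l) * (z @\<^sub>v w) $ (n*m+l))"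
    by (rule sum_lessThan_add_split)
  also have "(\<Sum>l<p*n. A_Mf n m p A B c $$ (i,n*m+l) * (z @\<^sub>v w) $ (n*m+l)) = 0"
    using i kron_A_r_carrier_mat[of n c m] A_c_carrier_mat[of n p A] unfolding A_Mf_def
    by (intro sum.neutral) (auto simp: mult.commute[of m n])
  also have "(\<Sum>l<n*m. A_Mf n m p A B c $$ (i,l) * (z @\<^sub>v w) $ l) = (\<Sum>l<n*m. kron (A_r n c) (1\<^sub>m m) $$ (i,l) * z $ l)"
    using i z w kron_A_r_carrier_mat[of n c m] A_c_carrier_mat[of n p A] unfolding A_Mf_def
    by (intro sum.cong refl) auto
  also have "\<dots> = (kron (A_r n c) (1\<^sub>m m) *\<^sub>v z) $ i" by (rule index_mult_mat_vec_lessThan[OF kron_A_r_carrier_mat z i, symmetric])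
  finally show ?thesis by simp
qed

lemma A_Mf_mult_append_vec_lower:
  fixes z w :: "real vec"
  assumes z: "z \<in> carrier_vec (n*m)" and w: "w \<in> carrier_vec (p*n)" and i: "i < p*n"
  shows "(A_Mf n m p A B c *\<^sub>v (z @\<^sub>v w)) $ (n*m+i) = (L_B n m p B *\<^sub>v z) $ i + (A_c n p A *\<^sub>v w) $ i"
proof -
  have zw: "z @\<^sub>v w \<in> carrier_vec (n*m+p*n)" using z w by simp
  have iN: "n*m+i < n*m+p*n" using i by simp
  have z': "z \<in> carrier_vec (m*n)" using z by (simp add: mult.commute)
  have "(A_Mf n m p A B c *\<^sub>v (z @\<^sub>v w)) $ (n*m+i) = (\<Sum>l<n*m+p*n. A_Mf n m p A B c $$ (n*m+i,l) * (z @\<^sub>v w) $ l)"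
    by (rule index_mult_mat_vec_lessThan[OF A_Mf_carrier_mat zw iN])
  also have "\<dots> = (\<Sum>l<n*m. A_Mf n m p A B c $$ (n*m+i,l) * (z @\<^sub>v w) $ l) + (\<Sum>l<p*n. A_Mf n m p A B c $$ (n*m+i,n*m+l) * (z @\<^sub>v w) $ (n*m+l))"
    by (rule sum_lessThan_add_split)
  also have "(\<Sum>l<p*n. A_Mf n m p A B c $$ (n*m+i,n*m+l) * (z @\<^sub>v w) $ (n*m+l)) = (\<Sum>l<p*n. A_c n p A $$ (i,l) * w $ l)"
    using i z w kron_A_r_carrier_mat[of n c m] A_c_carrier_mat[of n p A] unfolding A_Mf_def
    by (intro sum.cong refl) auto
  also have "\<dots> = (A_c n p A *\<^sub>v w) $ i" by (rule index_mult_mat_vec_lessThan[OF A_c_carrier_mat w i, symmetric])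
  also have "(\<Sum>l<n*m. A_Mf n m p A B c $$ (n*m+i,l) * (z @\<^sub>v w) $ l) = (\<Sum>l<m*n. L_B n m p B $$ (i,l) * z $ l)"
    using i z w kron_A_r_carrier_mat[of n c m] A_c_carrier_mat[of n p A] L_B_carrier_mat[of n m p B] unfolding A_Mf_def
    by (auto simp: mult.commute[of m n] intro!: sum.cong)
  also have "\<dots> = (L_B n m p B *\<^sub>v z) $ i" by (rule index_mult_mat_vec_lessThan[OF L_B_carrier_mat z' i, symmetric])
  finally show ?thesis by simp
qed

lemma L_B_mult_vec_block:
  fixes z :: "real vec"
  assumes z: "z \<in> carrier_vec (m*n)" and b: "b < n" and r: "r < p"
  shows "(L_B n m p B *\<^sub>v z) $ (b*p+r) = (if b < n-1 then 0 else (\<Sum>j<n. \<Sum>t<m. B (n-j) $$ (r,t) * z $ (j*m+t)))"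
proof -
  have i: "b*p+r < p*n" using block_index_less[OF b r] by (simp add: mult.commute)
  have "(L_B n m p B *\<^sub>v z) $ (b*p+r) = (\<Sum>l<m*n. L_B n m p B $$ (b*p+r, l) * z $ l)"
    by (rule index_mult_mat_vec_lessThan[OF L_B_carrier_mat z i])
  also have "\<dots> = (\<Sum>l<n*m. L_B n m p B $$ (b*p+r, l) * z $ l)" by (simp add: mult.commute)
  also have "\<dots> = (\<Sum>j<n. \<Sum>t<m. L_B n m p B $$ (b*p+r, j*m+t) * z $ (j*m+t))" by (rule sum_lessThan_mult_blocks)
  also have "\<dots> = (\<Sum>j<n. \<Sum>t<m. (if b < n-1 then 0 else B (n-j) $$ (r,t)) * z $ (j*m+t))"
  proof (intro sum.cong refl)
    fix j t assume j: "j \<in> {..<n}" and t: "t \<in> {..<m}"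
    have jj: "j*m+t < m*n" using block_index_less[of j n t m] j t by (simp add: mult.commute)
    have e: "\<not> b < n - 1 \<Longrightarrow> b*p + r - (n-1)*p = r" using b by (subgoal_tac "b = n-1") auto
    have e3: "(b*p + r < (n-1)*p) = (b < n-1)" using block_index_less_iff[of r p b "n-1"] r by simp
    show "L_B n m p B $$ (b*p+r, j*m+t) * z $ (j*m+t) = (if b < n-1 then 0 else B (n-j) $$ (r,t)) * z $ (j*m+t)"
      using i jj e e3 t unfolding L_B_def by simp
  qed
  also have "\<dots> = (if b < n-1 then 0 else (\<Sum>j<n. \<Sum>t<m. B (n-j) $$ (r,t) * z $ (j*m+t)))" by simp
  finally show ?thesis .
qed

lemma A_c_mult_vec_block:
  fixes w :: "real vec"
  assumes w: "w \<in> carrier_vec (p*n)" and b: "b < n" and r: "r < p"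
  shows "(A_c n p A *\<^sub>v w) $ (b*p+r) = (if b < n-1 then w $ ((b+1)*p+r) else - (\<Sum>j<n. \<Sum>r'<p. A (n-j) $$ (r,r') * w $ (j*p+r')))"
proof -
  have i: "b*p+r < p*n" using block_index_less[OF b r] by (simp add: mult.commute)
  have "(A_c n p A *\<^sub>v w) $ (b*p+r) = (\<Sum>l<p*n. A_c n p A $$ (b*p+r, l) * w $ l)"
    by (rule index_mult_mat_vec_lessThan[OF A_c_carrier_mat w i])
  also have "\<dots> = (\<Sum>l<n*p. A_c n p A $$ (b*p+r, l) * w $ l)" by (simp add: mult.commute)
  also have "\<dots> = (\<Sum>j<n. \<Sum>r'<p. A_c n p A $$ (b*p+r, j*p+r') * w $ (j*p+r'))" by (rule sum_lessThan_mult_blocks)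
  also have "\<dots> = (\<Sum>j<n. \<Sum>r'<p. (if b < n-1 then (if j = b+1 \<and> r' = r then 1 else 0) else - A (n-j) $$ (r,r')) * w $ (j*p+r'))"
  proof (intro sum.cong refl)
    fix j r' assume j: "j \<in> {..<n}" and r': "r' \<in> {..<p}"
    have jj: "j*p+r' < p*n" using block_index_less[of j n r' p] j r' by (simp add: mult.commute)
    have e: "\<not> b < n - 1 \<Longrightarrow> b*p + r - (n-1)*p = r" using b by (subgoal_tac "b = n-1") auto
    have e2: "(j*p+r' = b*p+r+p) = (j = b+1 \<and> r' = r)"
      using block_index_eq_iff[of r' p r j "b+1"] r r' by (simp add: ac_simps)
    have e3: "(b*p + r < (n-1)*p) = (b < n-1)" using block_index_less_iff[of r p b "n-1"] r by simp
    show "A_c n p A $$ (b*p+r, j*p+r') * w $ (j*p+r') = (if b < n-1 then (if j = b+1 \<and> r' = r then 1 else 0) else - A (n-j) $$ (r,r')) * w $ (j*p+r')"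
      using i jj e e2 e3 r' unfolding A_c_def by simp
  qed
  also have "\<dots> = (if b < n-1 then w $ ((b+1)*p+r) else - (\<Sum>j<n. \<Sum>r'<p. A (n-j) $$ (r,r') * w $ (j*p+r')))"
  proof (cases "b < n-1")
    case True
    have "b+1 < n" using True by simp
    then show ?thesis using True sum_lessThan_delta_mult2[of "b+1" n r p "\<lambda>j r'. w $ (j*p+r')"] r by simp
  next
    case False
    then show ?thesis by (simp add: sum_negf)
  qed
  finally show ?thesis .
qed

lemma B_Mf_mult_vec_upper:
  fixes u :: "real vec"
  assumes u: "u \<in> carrier_vec m" and i: "i < n*m"
  shows "(B_Mf n m p *\<^sub>v u) $ i = (kron (B_r n) (1\<^sub>m m) *\<^sub>v u) $ i"
proof -
  have iN: "i < n*m+p*n" using i by simp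
  have "(B_Mf n m p *\<^sub>v u) $ i = (\<Sum>l<m. B_Mf n m p $$ (i,l) * u $ l)" by (rule index_mult_mat_vec_lessThan[OF B_Mf_carrier_mat u iN])
  also have "\<dots> = (\<Sum>l<m. kron (B_r n) (1\<^sub>m m) $$ (i,l) * u $ l)"
    using i kron_B_r_carrier_mat[of n m] unfolding B_Mf_def append_rows_def by (intro sum.cong refl) auto
  also have "\<dots> = (kron (B_r n) (1\<^sub>m m) *\<^sub>v u) $ i" by (rule index_mult_mat_vec_lessThan[OF kron_B_r_carrier_mat u i, symmetric])
  finally show ?thesis .
qed

lemma B_Mf_mult_vec_lower:
  fixes u :: "real vec"
  assumes u: "u \<in> carrier_vec m" and i: "i < p*n"
  shows "(B_Mf n m p *\<^sub>v u) $ (n*m+i) = 0"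
proof -
  have iN: "n*m+i < n*m+p*n" using i by simp
  have "(B_Mf n m p *\<^sub>v u) $ (n*m+i) = (\<Sum>l<m. B_Mf n m p $$ (n*m+i,l) * u $ l)" by (rule index_mult_mat_vec_lessThan[OF B_Mf_carrier_mat u iN])
  also have "\<dots> = 0"
    using i kron_B_r_carrier_mat[of n m] unfolding B_Mf_def append_rows_def by (intro sum.neutral) auto
  finally show ?thesis .
qed

lemma G_Mf_carrier_mat: "G_Mf n m p \<in> carrier_mat (n*m+p*n) (p*n)"
  unfolding G_Mf_def using kron_B_r_carrier_mat[of n p] C_M_carrier_mat[of n p]
  by (auto simp: append_rows_def mult.commute[of m n])

lemma G_Mf_mult_vec_upper:
  fixes v :: "real vec"
  assumes v: "v \<in> carrier_vec (p*n)" and i: "i < n*m"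
  shows "(G_Mf n m p *\<^sub>v v) $ i = 0"
proof -
  have iN: "i < n*m+p*n" using i by simp
  have "(G_Mf n m p *\<^sub>v v) $ i = (\<Sum>l<p*n. G_Mf n m p $$ (i,l) * v $ l)" by (rule index_mult_mat_vec_lessThan[OF G_Mf_carrier_mat v iN])
  also have "\<dots> = 0"
    using i kron_B_r_carrier_mat[of n p] C_M_carrier_mat[of n p] unfolding G_Mf_def append_rows_def
    by (intro sum.neutral) (auto simp: mult.commute[of m n])
  finally show ?thesis .
qed

lemma G_Mf_mult_vec_lower:
  fixes v :: "real vec"
  assumes v: "v \<in> carrier_vec (p*n)" and i: "i < p*n"
  shows "(G_Mf n m p *\<^sub>v v) $ (n*m+i) = (kron (B_r n) (1\<^sub>m p) *\<^sub>v (C_M n p *\<^sub>v v)) $ i"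
proof -
  have iN: "n*m+i < n*m+p*n" using i by simp
  have i': "i < n*p" using i by (simp add: mult.commute)
  have KC: "kron (B_r n) (1\<^sub>m p) * C_M n p \<in> carrier_mat (n*p) (p*n)" using kron_B_r_carrier_mat[of n p] C_M_carrier_mat[of n p] by simp
  have "(G_Mf n m p *\<^sub>v v) $ (n*m+i) = (\<Sum>l<p*n. G_Mf n m p $$ (n*m+i,l) * v $ l)" by (rule index_mult_mat_vec_lessThan[OF G_Mf_carrier_mat v iN])
  also have "\<dots> = (\<Sum>l<p*n. (kron (B_r n) (1\<^sub>m p) * C_M n p) $$ (i,l) * v $ l)"
    using i KC unfolding G_Mf_def append_rows_def
    by (intro sum.cong refl) (auto simp: mult.commute[of m n] mult.commute[of n p])
  also have "\<dots> = ((kron (B_r n) (1\<^sub>m p) * C_M n p) *\<^sub>v v) $ i" by (rule index_mult_mat_vec_lessThan[OF KC v i', symmetric])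
  also have "\<dots> = (kron (B_r n) (1\<^sub>m p) *\<^sub>v (C_M n p *\<^sub>v v)) $ i"
    using assoc_mult_mat_vec[OF kron_B_r_carrier_mat C_M_carrier_mat v] by simp
  finally show ?thesis .
qed

section \<open>Reachability of the filtered realization\<close>

lemma unroll_shift_recurrence:
  fixes g :: "nat \<Rightarrow> nat \<Rightarrow> real" and \<beta> :: "nat \<Rightarrow> nat \<Rightarrow> real" and G :: "nat \<Rightarrow> nat \<Rightarrow> real"
  assumes rec: "\<And>k j. k < K \<Longrightarrow> j < n \<Longrightarrow>
      g (Suc k) j = (if 1 \<le> j then g k (j-1) else 0) + (\<Sum>r<p. \<beta> k r * G (n-j) r)"
  shows "k \<le> K \<Longrightarrow> j < n \<Longrightarrow> g k j = (if k \<le> j then g 0 (j-k) else 0)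
            + (\<Sum>i<min k (Suc j). \<Sum>r<p. \<beta> (k-1-i) r * G (n-j+i) r)"
proof (induct k arbitrary: j)
  case 0
  then show ?case by simp
next
  case (Suc k)
  have kK: "k < K" using Suc.prems by simp
  show ?case
  proof (cases j)
    case 0
    then show ?thesis using rec[OF kK Suc.prems(2)] by simp
  next
    case (Suc j')
    have IH: "g k j' = (if k \<le> j' then g 0 (j'-k) else 0)
            + (\<Sum>i<min k (Suc j'). \<Sum>r<p. \<beta> (k-1-i) r * G (n-j'+i) r)"
      using Suc.hyps[of j'] Suc.prems Suc by simp
    have "min (Suc k) (Suc j) = Suc (min k (Suc j'))" using Suc by simp
    then have "(\<Sum>i<min (Suc k) (Suc j). \<Sum>r<p. \<beta> (Suc k-1-i) r * G (n-j+i) r)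
       = (\<Sum>i<Suc (min k (Suc j')). \<Sum>r<p. \<beta> (Suc k-1-i) r * G (n-j+i) r)" by simp
    also have "\<dots> = (\<Sum>r<p. \<beta> (Suc k-1-0) r * G (n-j+0) r) + (\<Sum>i<min k (Suc j'). \<Sum>r<p. \<beta> (Suc k-1-Suc i) r * G (n-j+Suc i) r)"
      by (rule sum.lessThan_Suc_shift)
    also have "\<dots> = (\<Sum>r<p. \<beta> k r * G (n-j) r) + (\<Sum>i<min k (Suc j'). \<Sum>r<p. \<beta> (k-1-i) r * G (n-j'+i) r)"
    proof -
      have "\<And>i. Suc (n - j + i) = n + i - j'" "\<And>i. n - j' + i = n + i - j'" using Suc Suc.prems by simp_all
      then show ?thesis by simp
    qed
    finally have eq: "(\<Sum>i<min (Suc k) (Suc j). \<Sum>r<p. \<beta> (Suc k-1-i) r * G (n-j+i) r)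
       = (\<Sum>r<p. \<beta> k r * G (n-j) r) + (\<Sum>i<min k (Suc j'). \<Sum>r<p. \<beta> (k-1-i) r * G (n-j'+i) r)" .
    have "g (Suc k) j = g k j' + (\<Sum>r<p. \<beta> k r * G (n-j) r)" using rec[OF kK Suc.prems(2)] Suc by simp
    also have "\<dots> = (if Suc k \<le> j then g 0 (j - Suc k) else 0) + ((\<Sum>r<p. \<beta> k r * G (n-j) r)
        + (\<Sum>i<min k (Suc j'). \<Sum>r<p. \<beta> (k-1-i) r * G (n-j'+i) r))"
      unfolding IH using Suc by simp
    also have "\<dots> = (if Suc k \<le> j then g 0 (j - Suc k) else 0) +
        (\<Sum>i<min (Suc k) (Suc j). \<Sum>r<p. \<beta> (Suc k-1-i) r * G (n-j+i) r)"
      unfolding eq ..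
    finally show ?thesis .
  qed
qed

text \<open>\<^term>\<open>A_coeff A 0\<close> is the identity, the leading coefficient of \<open>I s\<^sup>n + A\<^sub>1 s\<^bsup>n-1\<^esup> + \<dots> + A\<^sub>n\<close>.\<close>
definition A_coeff :: "(nat \<Rightarrow> real mat) \<Rightarrow> nat \<Rightarrow> nat \<Rightarrow> nat \<Rightarrow> real" where
  "A_coeff A k r r' = (if k = 0 then (if r = r' then 1 else 0) else A k $$ (r,r'))"

definition CA_pow :: "real mat \<Rightarrow> real mat \<Rightarrow> nat \<Rightarrow> nat \<Rightarrow> nat \<Rightarrow> real" where
  "CA_pow Cb Ab q r j = (Cb * Ab ^\<^sub>m q) $$ (r,j)"

lemma CA_pow_Suc:
  assumes Ab: "Ab \<in> carrier_mat d d" and Cb: "Cb \<in> carrier_mat p d" and r: "r < p" and j: "j < d"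
  shows "CA_pow Cb Ab (Suc q) r j = (\<Sum>l<d. CA_pow Cb Ab q r l * Ab $$ (l,j))"
proof -
  have "Cb * Ab ^\<^sub>m Suc q = (Cb * Ab ^\<^sub>m q) * Ab"
    using Ab Cb by (simp add: assoc_mult_mat[symmetric, of _ p d _ d _ d])
  moreover have "((Cb * Ab ^\<^sub>m q) * Ab) $$ (r,j) = (\<Sum>l<d. (Cb * Ab ^\<^sub>m q) $$ (r,l) * Ab $$ (l,j))"
    by (rule index_mult_mat_lessThan[of _ p d _ d]) (use Ab Cb r j in auto)
  ultimately show ?thesis unfolding CA_pow_def by simp
qed

lemma sum_A_coeff_0_mult:
  fixes g :: "nat \<Rightarrow> real"
  assumes "r < p"
  shows "(\<Sum>r'<p. A_coeff A 0 r r' * g r') = g r"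
  unfolding A_coeff_def using sum_lessThan_delta_mult(4)[OF assms, of g] by simp

text \<open>Row \<open>r\<close> of block \<open>i\<close> of the similarity \<open>T\<close> with \<open>T Ab = A_M T\<close>, \<open>T Bb = B_M\<close> and \<open>C_M T = Cb\<close>,
  which takes the realization to the observer form of the input-output system.\<close>
definition canon_row :: "(nat \<Rightarrow> real mat) \<Rightarrow> real mat \<Rightarrow> real mat \<Rightarrow> nat \<Rightarrow> nat \<Rightarrow> nat \<Rightarrow> nat \<Rightarrow> nat \<Rightarrow> real" where
  "canon_row A Cb Ab n p i r j = (\<Sum>k<n-i. \<Sum>r'<p. A_coeff A k r r' * CA_pow Cb Ab (n-1-i-k) r' j)"

primrec left_iterate :: "real mat \<Rightarrow> nat \<Rightarrow> (nat \<Rightarrow> real) \<Rightarrow> nat \<Rightarrow> nat \<Rightarrow> real" where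
  "left_iterate M d w0 0 = w0"
| "left_iterate M d w0 (Suc k) = (\<lambda>j. \<Sum>i<d. left_iterate M d w0 k i * M $$ (i,j))"

lemma ctrb_mat_index:
  assumes "A \<in> carrier_mat d d" "B \<in> carrier_mat d m" "i < d" "k < d" "l < m"
  shows "ctrb_mat A B $$ (i, k*m+l) = (A ^\<^sub>m k * B) $$ (i, l)"
  using assms block_index_less[of k d l m] unfolding ctrb_mat_def by simp

lemma ctrb_mat_carrier: "A \<in> carrier_mat d d \<Longrightarrow> B \<in> carrier_mat d m \<Longrightarrow> ctrb_mat A B \<in> carrier_mat d (d*m)"
  unfolding ctrb_mat_def by auto

locale io_realization =
  fixes n m p :: nat and A B :: "nat \<Rightarrow> real mat" and Ab Bb Cb :: "real mat"
  assumes io: "io_description n m p A B Ab Bb Cb"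
    and Ab: "Ab \<in> carrier_mat (p*n) (p*n)" and Bb: "Bb \<in> carrier_mat (p*n) m"
    and Cb: "Cb \<in> carrier_mat p (p*n)"
    and Ak: "\<forall>i\<in>{1..n}. A i \<in> carrier_mat p p"
    and n1: "n \<ge> 1"
begin

lemma io_description_output_equation:
  assumes r: "r < p" and j: "j < p*n"
  shows "(\<Sum>k<Suc n. \<Sum>r'<p. A_coeff A k r r' * CA_pow Cb Ab (n-k) r' j) = 0"
proof -
  have h: "(Cb * Ab ^\<^sub>m n) $$ (r,j) + (\<Sum>k=1..n. (A k * Cb * Ab ^\<^sub>m (n - k)) $$ (r,j)) = 0"
    using io r j Ab unfolding io_description_def by auto
  have e: "\<And>k. k \<in> {1..n} \<Longrightarrow> (A k * Cb * Ab ^\<^sub>m (n - k)) $$ (r,j) = (\<Sum>r'<p. A k $$ (r,r') * CA_pow Cb Ab (n-k) r' j)"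
  proof -
    fix k assume k: "k \<in> {1..n}"
    have Akc: "A k \<in> carrier_mat p p" using Ak k by auto
    have "A k * Cb * Ab ^\<^sub>m (n - k) = A k * (Cb * Ab ^\<^sub>m (n - k))"
      using Akc Cb Ab by (simp add: assoc_mult_mat[of _ p p _ "p*n" _ "p*n"])
    moreover have "(A k * (Cb * Ab ^\<^sub>m (n - k))) $$ (r,j) = (\<Sum>r'<p. A k $$ (r,r') * (Cb * Ab ^\<^sub>m (n - k)) $$ (r',j))"
      by (rule index_mult_mat_lessThan[of _ p p _ "p*n"]) (use Akc Cb Ab r j in auto)
    ultimately show "(A k * Cb * Ab ^\<^sub>m (n - k)) $$ (r,j) = (\<Sum>r'<p. A k $$ (r,r') * CA_pow Cb Ab (n-k) r' j)"
      unfolding CA_pow_def by simp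
  qed
  have "(\<Sum>k<Suc n. \<Sum>r'<p. A_coeff A k r r' * CA_pow Cb Ab (n-k) r' j)
     = (\<Sum>r'<p. A_coeff A 0 r r' * CA_pow Cb Ab (n-0) r' j) + (\<Sum>k<n. \<Sum>r'<p. A_coeff A (Suc k) r r' * CA_pow Cb Ab (n - Suc k) r' j)"
    by (rule sum.lessThan_Suc_shift)
  also have "(\<Sum>r'<p. A_coeff A 0 r r' * CA_pow Cb Ab (n-0) r' j) = (Cb * Ab ^\<^sub>m n) $$ (r,j)"
    using sum_A_coeff_0_mult[OF r] unfolding CA_pow_def by simp
  also have "(\<Sum>k<n. \<Sum>r'<p. A_coeff A (Suc k) r r' * CA_pow Cb Ab (n - Suc k) r' j)
      = (\<Sum>k=1..n. (A k * Cb * Ab ^\<^sub>m (n - k)) $$ (r,j))"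
  proof -
    have "(\<Sum>k=1..n. (A k * Cb * Ab ^\<^sub>m (n - k)) $$ (r,j)) = (\<Sum>k=1..n. \<Sum>r'<p. A k $$ (r,r') * CA_pow Cb Ab (n-k) r' j)"
      by (rule sum.cong[OF refl]) (rule e)
    also have "\<dots> = (\<Sum>k<n. \<Sum>r'<p. A (Suc k) $$ (r,r') * CA_pow Cb Ab (n - Suc k) r' j)"
      by (simp only: One_nat_def sum.atLeast1_atMost_eq)
    finally show ?thesis by (simp add: A_coeff_def)
  qed
  finally show ?thesis using h by simp
qed

lemma io_description_input_coeff:
  assumes i: "i < n" and r: "r < p" and t: "t < m"
  shows "B (n-i) $$ (r,t) = (\<Sum>k<n-i. \<Sum>r'<p. A_coeff A k r r' * (\<Sum>l<p*n. CA_pow Cb Ab (n-1-i-k) r' l * Bb $$ (l,t)))"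
proof -
  have h: "B (n - i) $$ (r,t) = (Cb * Ab ^\<^sub>m (n - 1 - i) * Bb) $$ (r,t)
           + (\<Sum>k=1..n-1-i. (A k * Cb * Ab ^\<^sub>m (n - 1 - i - k) * Bb) $$ (r,t))"
    using io r t i unfolding io_description_def by auto
  have e0: "\<And>q r. r < p \<Longrightarrow> (Cb * Ab ^\<^sub>m q * Bb) $$ (r,t) = (\<Sum>l<p*n. CA_pow Cb Ab q r l * Bb $$ (l,t))"
  proof -
    fix q r assume r: "r < p"
    show "(Cb * Ab ^\<^sub>m q * Bb) $$ (r,t) = (\<Sum>l<p*n. CA_pow Cb Ab q r l * Bb $$ (l,t))"
      unfolding CA_pow_def by (rule index_mult_mat_lessThan[of _ p "p*n" _ m]) (use Ab Bb Cb r t in auto)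
  qed
  have ek: "\<And>k q. k \<in> {1..n} \<Longrightarrow> (A k * Cb * Ab ^\<^sub>m q * Bb) $$ (r,t) = (\<Sum>r'<p. A k $$ (r,r') * (\<Sum>l<p*n. CA_pow Cb Ab q r' l * Bb $$ (l,t)))"
  proof -
    fix k q assume k: "k \<in> {1..n}"
    have Akc: "A k \<in> carrier_mat p p" using Ak k by auto
    have CAB: "Cb * Ab ^\<^sub>m q * Bb \<in> carrier_mat p m" using Cb Ab Bb by auto
    have "A k * Cb * Ab ^\<^sub>m q * Bb = A k * (Cb * Ab ^\<^sub>m q * Bb)"
    proof -
      have "A k * Cb * Ab ^\<^sub>m q = A k * (Cb * Ab ^\<^sub>m q)"
        using Akc Cb Ab by (simp add: assoc_mult_mat[of _ p p _ "p*n" _ "p*n"])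
      then have "A k * Cb * Ab ^\<^sub>m q * Bb = A k * (Cb * Ab ^\<^sub>m q) * Bb" by simp
      also have "\<dots> = A k * (Cb * Ab ^\<^sub>m q * Bb)"
        using Akc Cb Ab Bb by (simp add: assoc_mult_mat[of _ p p _ "p*n" _ m])
      finally show ?thesis .
    qed
    moreover have "(A k * (Cb * Ab ^\<^sub>m q * Bb)) $$ (r,t) = (\<Sum>r'<p. A k $$ (r,r') * (Cb * Ab ^\<^sub>m q * Bb) $$ (r',t))"
      by (rule index_mult_mat_lessThan[of _ p p _ m]) (use Akc CAB r t in auto)
    ultimately show "(A k * Cb * Ab ^\<^sub>m q * Bb) $$ (r,t) = (\<Sum>r'<p. A k $$ (r,r') * (\<Sum>l<p*n. CA_pow Cb Ab q r' l * Bb $$ (l,t)))"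
      using e0 by simp
  qed
  have ni: "n - i = Suc (n-1-i)" using i by simp
  have "(\<Sum>k<n-i. \<Sum>r'<p. A_coeff A k r r' * (\<Sum>l<p*n. CA_pow Cb Ab (n-1-i-k) r' l * Bb $$ (l,t)))
     = (\<Sum>r'<p. A_coeff A 0 r r' * (\<Sum>l<p*n. CA_pow Cb Ab (n-1-i-0) r' l * Bb $$ (l,t)))
       + (\<Sum>k<n-1-i. \<Sum>r'<p. A_coeff A (Suc k) r r' * (\<Sum>l<p*n. CA_pow Cb Ab (n-1-i-Suc k) r' l * Bb $$ (l,t)))"
    unfolding ni by (rule sum.lessThan_Suc_shift)
  also have "(\<Sum>r'<p. A_coeff A 0 r r' * (\<Sum>l<p*n. CA_pow Cb Ab (n-1-i-0) r' l * Bb $$ (l,t))) = (Cb * Ab ^\<^sub>m (n - 1 - i) * Bb) $$ (r,t)"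
    using sum_A_coeff_0_mult[OF r] e0[OF r] by simp
  also have "(\<Sum>k<n-1-i. \<Sum>r'<p. A_coeff A (Suc k) r r' * (\<Sum>l<p*n. CA_pow Cb Ab (n-1-i-Suc k) r' l * Bb $$ (l,t)))
     = (\<Sum>k=1..n-1-i. (A k * Cb * Ab ^\<^sub>m (n - 1 - i - k) * Bb) $$ (r,t))"
  proof -
    have "(\<Sum>k=1..n-1-i. (A k * Cb * Ab ^\<^sub>m (n - 1 - i - k) * Bb) $$ (r,t))
        = (\<Sum>k=1..n-1-i. \<Sum>r'<p. A k $$ (r,r') * (\<Sum>l<p*n. CA_pow Cb Ab (n-1-i-k) r' l * Bb $$ (l,t)))"
      by (rule sum.cong[OF refl]) (rule ek, auto)
    also have "\<dots> = (\<Sum>k<n-1-i. \<Sum>r'<p. A (Suc k) $$ (r,r') * (\<Sum>l<p*n. CA_pow Cb Ab (n-1-i-Suc k) r' l * Bb $$ (l,t)))"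
      by (simp only: One_nat_def sum.atLeast1_atMost_eq)
    finally show ?thesis by (simp add: A_coeff_def)
  qed
  finally show ?thesis using h by simp
qed

lemma sum_canon_row_mult_Abar:
  assumes i1: "1 \<le> i" and i: "i < n" and r: "r < p" and j: "j < p*n"
  shows "(\<Sum>l<p*n. canon_row A Cb Ab n p i r l * Ab $$ (l,j)) = canon_row A Cb Ab n p (i-1) r j - (\<Sum>r'<p. A (n-i) $$ (r,r') * CA_pow Cb Ab 0 r' j)"
proof -
  have "(\<Sum>l<p*n. canon_row A Cb Ab n p i r l * Ab $$ (l,j)) = (\<Sum>k<n-i. \<Sum>r'<p. A_coeff A k r r' * (\<Sum>l<p*n. CA_pow Cb Ab (n-1-i-k) r' l * Ab $$ (l,j)))"
    unfolding canon_row_def by (rule sum_swap_mult_right3)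
  also have "\<dots> = (\<Sum>k<n-i. \<Sum>r'<p. A_coeff A k r r' * CA_pow Cb Ab (n-i-k) r' j)"
  proof (intro sum.cong refl)
    fix k r' assume k: "k \<in> {..<n-i}" and r': "r' \<in> {..<p}"
    have "n-i-k = Suc (n-1-i-k)" using k by auto
    then show "A_coeff A k r r' * (\<Sum>l<p*n. CA_pow Cb Ab (n-1-i-k) r' l * Ab $$ (l,j)) = A_coeff A k r r' * CA_pow Cb Ab (n-i-k) r' j"
      using CA_pow_Suc[OF Ab Cb _ j, of r' "n-1-i-k"] r' by simp
  qed
  finally have 1: "(\<Sum>l<p*n. canon_row A Cb Ab n p i r l * Ab $$ (l,j)) = (\<Sum>k<n-i. \<Sum>r'<p. A_coeff A k r r' * CA_pow Cb Ab (n-i-k) r' j)" .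
  have "canon_row A Cb Ab n p (i-1) r j = (\<Sum>k<Suc (n-i). \<Sum>r'<p. A_coeff A k r r' * CA_pow Cb Ab (n-i-k) r' j)"
    unfolding canon_row_def using i1 i by (intro sum.cong) auto
  also have "\<dots> = (\<Sum>k<n-i. \<Sum>r'<p. A_coeff A k r r' * CA_pow Cb Ab (n-i-k) r' j) + (\<Sum>r'<p. A (n-i) $$ (r,r') * CA_pow Cb Ab 0 r' j)"
    using i by (simp add: A_coeff_def)
  finally show ?thesis using 1 by simp
qed

lemma sum_canon_row_0_mult_Abar:
  assumes r: "r < p" and j: "j < p*n"
  shows "(\<Sum>l<p*n. canon_row A Cb Ab n p 0 r l * Ab $$ (l,j)) = - (\<Sum>r'<p. A n $$ (r,r') * CA_pow Cb Ab 0 r' j)"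
proof -
  have "(\<Sum>l<p*n. canon_row A Cb Ab n p 0 r l * Ab $$ (l,j)) = (\<Sum>k<n. \<Sum>r'<p. A_coeff A k r r' * (\<Sum>l<p*n. CA_pow Cb Ab (n-1-k) r' l * Ab $$ (l,j)))"
    unfolding canon_row_def by (simp add: sum_swap_mult_right3)
  also have "\<dots> = (\<Sum>k<n. \<Sum>r'<p. A_coeff A k r r' * CA_pow Cb Ab (n-k) r' j)"
  proof (intro sum.cong refl)
    fix k r' assume k: "k \<in> {..<n}" and r': "r' \<in> {..<p}"
    have "n-k = Suc (n-1-k)" using k by auto
    then show "A_coeff A k r r' * (\<Sum>l<p*n. CA_pow Cb Ab (n-1-k) r' l * Ab $$ (l,j)) = A_coeff A k r r' * CA_pow Cb Ab (n-k) r' j"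
      using CA_pow_Suc[OF Ab Cb _ j, of r' "n-1-k"] r' by simp
  qed
  also have "\<dots> = (\<Sum>k<Suc n. \<Sum>r'<p. A_coeff A k r r' * CA_pow Cb Ab (n-k) r' j) - (\<Sum>r'<p. A n $$ (r,r') * CA_pow Cb Ab 0 r' j)"
    using n1 by (simp add: A_coeff_def)
  also have "\<dots> = - (\<Sum>r'<p. A n $$ (r,r') * CA_pow Cb Ab 0 r' j)"
    using io_description_output_equation[OF r j] by simp
  finally show ?thesis .
qed

lemma sum_canon_row_mult_Bbar:
  assumes i: "i < n" and r: "r < p" and t: "t < m"
  shows "(\<Sum>l<p*n. canon_row A Cb Ab n p i r l * Bb $$ (l,t)) = B (n-i) $$ (r,t)"
  unfolding canon_row_def sum_swap_mult_right3 using io_description_input_coeff[OF i r t] by simp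

lemma canon_row_last:
  assumes r: "r < p"
  shows "canon_row A Cb Ab n p (n-1) r j = CA_pow Cb Ab 0 r j"
  unfolding canon_row_def using n1 sum_A_coeff_0_mult[OF r] by simp

lemma sum_canon_comb_mult_Bbar:
  fixes \<beta> :: "nat \<Rightarrow> nat \<Rightarrow> real"
  assumes t: "t < m"
  shows "(\<Sum>l<p*n. (\<Sum>i<n. \<Sum>r<p. \<beta> (s+i) r * canon_row A Cb Ab n p i r l) * Bb $$ (l,t))
       = (\<Sum>i<n. \<Sum>r<p. \<beta> (s+i) r * B (n-i) $$ (r,t))"
  unfolding sum_swap_mult_right3 using sum_canon_row_mult_Bbar[OF _ _ t] by simp

text \<open>The boundary terms \<open>- A\<^bsub>n-i\<^esub> Cb\<close> of the rows \<^const>\<open>canon_row\<close> times \<^term>\<open>Ab\<close>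
  cancel against the autoregressive recurrence of \<^term>\<open>\<beta>\<close>.\<close>
lemma canon_comb_Suc:
  fixes \<beta> :: "nat \<Rightarrow> nat \<Rightarrow> real"
  assumes E2: "\<And>s r. r < p \<Longrightarrow> \<beta> (s+n) r = - (\<Sum>i<n. \<Sum>r'<p. \<beta> (s+i) r' * A (n-i) $$ (r',r))"
    and j: "j < p*n"
  shows "(\<Sum>i<n. \<Sum>r<p. \<beta> (Suc s+i) r * canon_row A Cb Ab n p i r j)
       = (\<Sum>l<p*n. (\<Sum>i<n. \<Sum>r<p. \<beta> (s+i) r * canon_row A Cb Ab n p i r l) * Ab $$ (l,j))"
proof -
  obtain n1 where n: "n = Suc n1" using n1 by (cases n) auto
  define Z where "Z i = (\<Sum>r<p. \<beta> (s+i) r * (\<Sum>r'<p. A (n-i) $$ (r,r') * CA_pow Cb Ab 0 r' j))" for i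
  have "(\<Sum>l<p*n. (\<Sum>i<n. \<Sum>r<p. \<beta> (s+i) r * canon_row A Cb Ab n p i r l) * Ab $$ (l,j))
      = (\<Sum>i<n. \<Sum>r<p. \<beta> (s+i) r * (\<Sum>l<p*n. canon_row A Cb Ab n p i r l * Ab $$ (l,j)))"
    by (rule sum_swap_mult_right3)
  also have "\<dots> = (\<Sum>r<p. \<beta> (s+0) r * (\<Sum>l<p*n. canon_row A Cb Ab n p 0 r l * Ab $$ (l,j)))
     + (\<Sum>i<n1. \<Sum>r<p. \<beta> (s+Suc i) r * (\<Sum>l<p*n. canon_row A Cb Ab n p (Suc i) r l * Ab $$ (l,j)))"
    unfolding n by (rule sum.lessThan_Suc_shift)
  also have "(\<Sum>r<p. \<beta> (s+0) r * (\<Sum>l<p*n. canon_row A Cb Ab n p 0 r l * Ab $$ (l,j))) = - Z 0"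
    unfolding Z_def using sum_canon_row_0_mult_Abar[OF _ j] by (simp add: sum_negf)
  also have "(\<Sum>i<n1. \<Sum>r<p. \<beta> (s+Suc i) r * (\<Sum>l<p*n. canon_row A Cb Ab n p (Suc i) r l * Ab $$ (l,j)))
     = (\<Sum>i<n1. (\<Sum>r<p. \<beta> (s+Suc i) r * canon_row A Cb Ab n p i r j) - Z (Suc i))"
  proof (rule sum.cong[OF refl])
    fix i assume i: "i \<in> {..<n1}"
    have "(\<Sum>r<p. \<beta> (s+Suc i) r * (\<Sum>l<p*n. canon_row A Cb Ab n p (Suc i) r l * Ab $$ (l,j)))
       = (\<Sum>r<p. \<beta> (s+Suc i) r * (canon_row A Cb Ab n p i r j - (\<Sum>r'<p. A (n-Suc i) $$ (r,r') * CA_pow Cb Ab 0 r' j)))"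
      using sum_canon_row_mult_Abar[of "Suc i" _ j] i n j by (intro sum.cong refl) simp
    then show "(\<Sum>r<p. \<beta> (s+Suc i) r * (\<Sum>l<p*n. canon_row A Cb Ab n p (Suc i) r l * Ab $$ (l,j)))
       = (\<Sum>r<p. \<beta> (s+Suc i) r * canon_row A Cb Ab n p i r j) - Z (Suc i)"
      unfolding Z_def by (simp add: right_diff_distrib sum_subtractf)
  qed
  finally have R: "(\<Sum>l<p*n. (\<Sum>i<n. \<Sum>r<p. \<beta> (s+i) r * canon_row A Cb Ab n p i r l) * Ab $$ (l,j))
     = - Z 0 + (\<Sum>i<n1. (\<Sum>r<p. \<beta> (s+Suc i) r * canon_row A Cb Ab n p i r j) - Z (Suc i))" .
  have K: "(\<Sum>r<p. (\<Sum>i<n. \<Sum>r'<p. \<beta> (s+i) r' * A (n-i) $$ (r',r)) * CA_pow Cb Ab 0 r j) = (\<Sum>i<n. Z i)"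
  proof -
    have "(\<Sum>r<p. (\<Sum>i<n. \<Sum>r'<p. \<beta> (s+i) r' * A (n-i) $$ (r',r)) * CA_pow Cb Ab 0 r j)
       = (\<Sum>r<p. \<Sum>i<n. \<Sum>r'<p. \<beta> (s+i) r' * A (n-i) $$ (r',r) * CA_pow Cb Ab 0 r j)"
      by (simp add: sum_distrib_right)
    also have "\<dots> = (\<Sum>i<n. \<Sum>r<p. \<Sum>r'<p. \<beta> (s+i) r' * A (n-i) $$ (r',r) * CA_pow Cb Ab 0 r j)"
      by (rule sum.swap)
    also have "\<dots> = (\<Sum>i<n. \<Sum>r'<p. \<Sum>r<p. \<beta> (s+i) r' * A (n-i) $$ (r',r) * CA_pow Cb Ab 0 r j)"
      by (rule sum.cong[OF refl]) (rule sum.swap)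
    also have "\<dots> = (\<Sum>i<n. Z i)"
      unfolding Z_def by (simp add: sum_distrib_left mult.assoc)
    finally show ?thesis .
  qed
  have "(\<Sum>i<n. \<Sum>r<p. \<beta> (Suc s+i) r * canon_row A Cb Ab n p i r j)
     = (\<Sum>i<n1. \<Sum>r<p. \<beta> (s+Suc i) r * canon_row A Cb Ab n p i r j) + (\<Sum>r<p. \<beta> (s+n) r * canon_row A Cb Ab n p n1 r j)"
    unfolding n by simp
  also have "(\<Sum>r<p. \<beta> (s+n) r * canon_row A Cb Ab n p n1 r j) = - (\<Sum>i<n. Z i)"
  proof -
    have "(\<Sum>r<p. \<beta> (s+n) r * canon_row A Cb Ab n p n1 r j) = (\<Sum>r<p. (- (\<Sum>i<n. \<Sum>r'<p. \<beta> (s+i) r' * A (n-i) $$ (r',r))) * CA_pow Cb Ab 0 r j)"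
      using canon_row_last E2 n by (intro sum.cong refl) simp
    then show ?thesis using K by (simp add: sum_negf)
  qed
  also have "(\<Sum>i<n. Z i) = Z 0 + (\<Sum>i<n1. Z (Suc i))" unfolding n by (rule sum.lessThan_Suc_shift)
  finally show ?thesis unfolding R by (simp add: sum_subtractf)
qed

lemma canon_comb_0_eq_zero:
  fixes \<beta> :: "nat \<Rightarrow> nat \<Rightarrow> real"
  assumes reach: "reachable_pair Ab Bb"
    and rec: "\<And>s r. r < p \<Longrightarrow> \<beta> (s+n) r = - (\<Sum>i<n. \<Sum>r'<p. \<beta> (s+i) r' * A (n-i) $$ (r',r))"
    and markov: "\<And>s t. s < p*n \<Longrightarrow> t < m \<Longrightarrow> (\<Sum>i<n. \<Sum>r<p. \<beta> (s+i) r * B (n-i) $$ (r,t)) = 0"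
    and j: "j < p*n"
  shows "(\<Sum>i<n. \<Sum>r<p. \<beta> i r * canon_row A Cb Ab n p i r j) = 0"
proof -
  define psi where "psi s l = (\<Sum>i<n. \<Sum>r<p. \<beta> (s+i) r * canon_row A Cb Ab n p i r l)" for s l
  have psi_Suc: "\<And>s j. j < p*n \<Longrightarrow> psi (Suc s) j = (\<Sum>l<p*n. psi s l * Ab $$ (l,j))"
    unfolding psi_def by (rule canon_comb_Suc[OF rec])
  have "\<forall>k<p*n*m. (\<Sum>l<p*n. vec (p*n) (psi 0) $ l * ctrb_mat Ab Bb $$ (l,k)) = 0"
  proof (intro allI impI)
    fix k assume k: "k < p*n*m"
    define s t where "s = k div m" and "t = k mod m"
    have m0: "m > 0" using k by (cases m) auto
    have t: "t < m" and s: "s < p*n" and kst: "k = s*m + t"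
      unfolding s_def t_def using k m0 by (simp_all add: less_mult_imp_div_less)
    have "(\<Sum>l<p*n. vec (p*n) (psi 0) $ l * ctrb_mat Ab Bb $$ (l,k)) = (\<Sum>l<p*n. psi 0 l * (Ab ^\<^sub>m s * Bb) $$ (l,t))"
      unfolding kst using ctrb_mat_index[OF Ab Bb _ s t] by simp
    also have "\<dots> = (\<Sum>l<p*n. psi s l * Bb $$ (l,t))"
      by (rule sum_mult_iterate_eq_mat_pow[where f=psi, OF Ab psi_Suc Bb t, symmetric])
    also have "\<dots> = (\<Sum>i<n. \<Sum>r<p. \<beta> (s+i) r * B (n-i) $$ (r,t))"
      unfolding psi_def by (rule sum_canon_comb_mult_Bbar[OF t])
    finally show "(\<Sum>l<p*n. vec (p*n) (psi 0) $ l * ctrb_mat Ab Bb $$ (l,k)) = 0"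
      using markov[OF s t] by simp
  qed
  moreover have "vec_space.rank (p*n) (ctrb_mat Ab Bb) = p*n"
    using reach Ab Bb unfolding reachable_pair_def mat_rank_def ctrb_mat_def by simp
  ultimately have "vec (p*n) (psi 0) = 0\<^sub>v (p*n)"
    by (intro left_kernel_trivial_if_rank_eq_dim_row[OF ctrb_mat_carrier[OF Ab Bb]]) simp_all
  then have "vec (p*n) (psi 0) $ j = 0" using j by simp
  then show ?thesis using j unfolding psi_def by simp
qed

text \<open>Proved by summing along the anti-diagonals \<open>i + k = u\<close>.\<close>
lemma canon_comb_0_eq_obs_comb:
  fixes \<beta> :: "nat \<Rightarrow> nat \<Rightarrow> real"
  defines "\<tau> u r' \<equiv> \<Sum>i\<le>u. \<Sum>r<p. \<beta> i r * A_coeff A (u-i) r r'"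
  shows "(\<Sum>i<n. \<Sum>r<p. \<beta> i r * canon_row A Cb Ab n p i r j)
       = (\<Sum>u<n. \<Sum>r'<p. \<tau> u r' * CA_pow Cb Ab (n-1-u) r' j)"
proof -
  define G where "G i k = (\<Sum>r<p. \<Sum>r'<p. \<beta> i r * A_coeff A k r r' * CA_pow Cb Ab (n-1-i-k) r' j)" for i k
  have "(\<Sum>i<n. \<Sum>r<p. \<beta> i r * canon_row A Cb Ab n p i r j)
      = (\<Sum>i<n. \<Sum>r<p. \<Sum>k<n-i. \<Sum>r'<p. \<beta> i r * A_coeff A k r r' * CA_pow Cb Ab (n-1-i-k) r' j)"
    unfolding canon_row_def by (simp add: sum_distrib_left mult.assoc)
  also have "\<dots> = (\<Sum>i<n. \<Sum>k<n-i. G i k)"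
    unfolding G_def by (rule sum.cong[OF refl]) (rule sum.swap)
  also have "\<dots> = (\<Sum>(i,k)\<in>{(i,k). i+k<n}. G i k)"
  proof -
    have "(SIGMA i:{..<n}. {..<n-i}) = {(i,k). i+k<n}" by auto
    then show ?thesis by (simp add: sum.Sigma)
  qed
  also have "\<dots> = (\<Sum>u<n. \<Sum>i\<le>u. G i (u-i))" by (rule sum.triangle_reindex)
  also have "\<dots> = (\<Sum>u<n. \<Sum>r'<p. \<tau> u r' * CA_pow Cb Ab (n-1-u) r' j)"
  proof (rule sum.cong[OF refl])
    fix u assume u: "u \<in> {..<n}"
    have "(\<Sum>i\<le>u. G i (u-i)) = (\<Sum>i\<le>u. \<Sum>r<p. \<Sum>r'<p. \<beta> i r * A_coeff A (u-i) r r' * CA_pow Cb Ab (n-1-u) r' j)"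
      unfolding G_def by (intro sum.cong refl) auto
    also have "\<dots> = (\<Sum>i\<le>u. \<Sum>r'<p. \<Sum>r<p. \<beta> i r * A_coeff A (u-i) r r' * CA_pow Cb Ab (n-1-u) r' j)"
      by (rule sum.cong[OF refl]) (rule sum.swap)
    also have "\<dots> = (\<Sum>r'<p. \<Sum>i\<le>u. \<Sum>r<p. \<beta> i r * A_coeff A (u-i) r r' * CA_pow Cb Ab (n-1-u) r' j)"
      by (rule sum.swap)
    finally show "(\<Sum>i\<le>u. G i (u-i)) = (\<Sum>r'<p. \<tau> u r' * CA_pow Cb Ab (n-1-u) r' j)"
      unfolding \<tau>_def by (simp add: sum_distrib_right)
  qed
  finally show ?thesis .
qed

lemma obs_comb_eq_zero:
  fixes \<tau> :: "nat \<Rightarrow> nat \<Rightarrow> real"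
  assumes obs: "mat_rank (obs_mat Cb Ab n) = p*n"
    and comb: "\<And>j. j < p*n \<Longrightarrow> (\<Sum>u<n. \<Sum>r'<p. \<tau> u r' * CA_pow Cb Ab (n-1-u) r' j) = 0"
    and u: "u < n" and r': "r' < p"
  shows "\<tau> u r' = 0"
proof -
  have O: "obs_mat Cb Ab n \<in> carrier_mat (p*n) (p*n)" using Cb unfolding obs_mat_def by auto
  have rk: "vec_space.rank (p*n) (obs_mat Cb Ab n) = p*n"
    using obs O unfolding mat_rank_def by simp
  define w where "w = vec (p*n) (\<lambda>i. \<tau> (n-1-i div p) (i mod p))"
  have "\<forall>j<p*n. (\<Sum>i<p*n. w $ i * obs_mat Cb Ab n $$ (i,j)) = 0"
  proof (intro allI impI)
    fix j assume j: "j < p*n"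
    have "(\<Sum>i<p*n. w $ i * obs_mat Cb Ab n $$ (i,j)) = (\<Sum>q<n. \<Sum>r'<p. w $ (q*p+r') * obs_mat Cb Ab n $$ (q*p+r',j))"
      using sum_lessThan_mult_blocks[of _ n p] by (simp add: mult.commute)
    also have "\<dots> = (\<Sum>q<n. \<Sum>r'<p. \<tau> (n-1-q) r' * CA_pow Cb Ab (n-1-(n-1-q)) r' j)"
    proof (intro sum.cong refl)
      fix q r' assume q: "q \<in> {..<n}" and r': "r' \<in> {..<p}"
      have i: "q*p+r' < p*n" using block_index_less[of q n r' p] q r' by (simp add: mult.commute)
      show "w $ (q*p+r') * obs_mat Cb Ab n $$ (q*p+r',j) = \<tau> (n-1-q) r' * CA_pow Cb Ab (n-1-(n-1-q)) r' j"
        using i j Cb r' q unfolding w_def obs_mat_def CA_pow_def by simp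
    qed
    also have "\<dots> = (\<Sum>u<n. \<Sum>r'<p. \<tau> u r' * CA_pow Cb Ab (n-1-u) r' j)"
      using sum.nat_diff_reindex[of "\<lambda>u. \<Sum>r'<p. \<tau> u r' * CA_pow Cb Ab (n-1-u) r' j" n]
      by (simp add: Suc_diff_Suc)
    finally show "(\<Sum>i<p*n. w $ i * obs_mat Cb Ab n $$ (i,j)) = 0" using comb[OF j] by simp
  qed
  then have "w = 0\<^sub>v (p*n)"
    by (intro left_kernel_trivial_if_rank_eq_dim_row[OF O rk]) (simp_all add: w_def)
  moreover have i: "(n-1-u)*p + r' < p*n" using block_index_less[of "n-1-u" n r' p] u r' by (simp add: mult.commute)
  ultimately have "w $ ((n-1-u)*p + r') = 0" by simp
  then show ?thesis using i u r' unfolding w_def by simp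
qed

text \<open>A sequence obeying the autoregressive recurrence of the input-output system whose Markov-type
  combinations with the matrices \<^term>\<open>B i\<close> vanish is zero: reachability of \<^term>\<open>(Ab, Bb)\<close>
  kills the combination of the rows \<^const>\<open>canon_row\<close>, observability then kills its
  coefficients, and these determine \<^term>\<open>\<beta>\<close> by a triangular system.\<close>
lemma AR_sequence_eq_zero:
  fixes \<beta> :: "nat \<Rightarrow> nat \<Rightarrow> real"
  assumes reach: "reachable_pair Ab Bb" and obs: "mat_rank (obs_mat Cb Ab n) = p*n"
    and rec: "\<And>s r. r < p \<Longrightarrow> \<beta> (s+n) r = - (\<Sum>i<n. \<Sum>r'<p. \<beta> (s+i) r' * A (n-i) $$ (r',r))"
    and markov: "\<And>s t. s < p*n \<Longrightarrow> t < m \<Longrightarrow> (\<Sum>i<n. \<Sum>r<p. \<beta> (s+i) r * B (n-i) $$ (r,t)) = 0"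
  shows "u < n \<Longrightarrow> r < p \<Longrightarrow> \<beta> u r = 0"
proof (induct u arbitrary: r rule: less_induct)
  case (less u)
  define \<tau> where "\<tau> u r' = (\<Sum>i\<le>u. \<Sum>r<p. \<beta> i r * A_coeff A (u-i) r r')" for u r'
  have "(\<Sum>u<n. \<Sum>r'<p. \<tau> u r' * CA_pow Cb Ab (n-1-u) r' j) = 0" if "j < p*n" for j
    using canon_comb_0_eq_obs_comb[of \<beta> j] canon_comb_0_eq_zero[OF reach rec markov that]
    unfolding \<tau>_def by simp
  then have "\<tau> u r = 0" by (rule obs_comb_eq_zero[OF obs _ less.prems])
  moreover have "\<tau> u r = (\<Sum>i<u. \<Sum>r'<p. \<beta> i r' * A_coeff A (u-i) r' r) + (\<Sum>r'<p. \<beta> u r' * A_coeff A 0 r' r)"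
    unfolding \<tau>_def by (simp add: lessThan_Suc_atMost[symmetric])
  moreover have "(\<Sum>i<u. \<Sum>r'<p. \<beta> i r' * A_coeff A (u-i) r' r) = 0"
    using less by (intro sum.neutral) auto
  moreover have "(\<Sum>r'<p. \<beta> u r' * A_coeff A 0 r' r) = \<beta> u r"
    unfolding A_coeff_def using sum_lessThan_delta_mult(1)[OF less.prems(2), of "\<beta> u"] by simp
  ultimately show ?case by simp
qed

end

text \<open>\<^term>\<open>f k\<close> plays the row vector \<open>w A_Mf\<^sup>k\<close>, where \<open>w\<close> is orthogonal to the reachability
  matrix of \<open>(A_Mf, B_Mf)\<close>; its entries \<^term>\<open>f k (n*m + ((n-1)*p + r))\<close> in the last block
  of the \<open>\<mu>\<close>-part form the sequence to which \<open>AR_sequence_eq_zero\<close> applies.\<close>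
locale A_Mf_annihilator =
  fixes n m p :: nat and A B :: "nat \<Rightarrow> real mat" and c :: "nat \<Rightarrow> real" and f :: "nat \<Rightarrow> nat \<Rightarrow> real"
  assumes n1: "n \<ge> 1"
    and f_Suc: "\<And>k j. j < n*m + p*n \<Longrightarrow> f (Suc k) j = (\<Sum>i<n*m + p*n. f k i * A_Mf n m p A B c $$ (i,j))"
    and f_B_Mf: "\<And>k l. k < n*m + p*n \<Longrightarrow> l < m \<Longrightarrow> f k ((n-1)*m + l) = 0"
begin

lemma annihilator_zeta_unrolled:
  assumes "k \<le> n*m + p*n" and "j < n" and "t < m"
  shows "f k (j*m+t) = (if k \<le> j then f 0 ((j-k)*m+t) else 0)
    + (\<Sum>i<min k (Suc j). \<Sum>r<p. f (k-1-i) (n*m + ((n-1)*p + r)) * B (n-j+i) $$ (r,t))"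
proof (rule unroll_shift_recurrence[where g="\<lambda>k j. f k (j*m+t)" and G="\<lambda>i r. B i $$ (r,t)", OF _ assms(1,2)])
  fix k b assume k: "k < n*m + p*n" and b: "b < n"
  have "b*m+t < n*m + p*n" using block_index_less[OF b \<open>t < m\<close>] by simp
  then show "f (Suc k) (b*m+t) = (if 1 \<le> b then f k ((b-1)*m+t) else 0)
      + (\<Sum>r<p. f k (n*m + ((n-1)*p + r)) * B (n-b) $$ (r,t))"
    using f_Suc sum_mult_A_Mf_col_zeta[OF b \<open>t < m\<close>, of "f k" p A B c] f_B_Mf[OF k \<open>t < m\<close>]
    by (simp add: add.assoc)
qed

lemma annihilator_mu_unrolled:
  assumes "j < n" and "r < p"
  shows "f k (n*m+(j*p+r)) = (if k \<le> j then f 0 (n*m+((j-k)*p+r)) else 0)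
    + (\<Sum>i<min k (Suc j). \<Sum>r'<p. f (k-1-i) (n*m + ((n-1)*p + r')) * (- A (n-j+i) $$ (r',r)))"
proof (rule unroll_shift_recurrence[where g="\<lambda>k j. f k (n*m+(j*p+r))" and G="\<lambda>i r'. - A i $$ (r',r)" and K=k,
      OF _ order.refl assms(1)])
  fix k' b assume b: "b < n"
  have "n*m+(b*p+r) < n*m + p*n" using block_index_less[OF b \<open>r < p\<close>] by (simp add: mult.commute)
  then show "f (Suc k') (n*m+(b*p+r)) = (if 1 \<le> b then f k' (n*m+((b-1)*p+r)) else 0)
      + (\<Sum>r'<p. f k' (n*m + ((n-1)*p + r')) * (- A (n-b) $$ (r',r)))"
    using f_Suc sum_mult_A_Mf_col_mu[OF b \<open>r < p\<close>, of "f k'" m A B c] by (simp add: sum_negf)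
qed

lemma annihilator_output_markov:
  assumes s: "s + n < n*m + p*n" and t: "t < m"
  shows "(\<Sum>i<n. \<Sum>r<p. f (s+i) (n*m + ((n-1)*p + r)) * B (n-i) $$ (r,t)) = 0"
proof -
  have "min (s+n) (Suc (n-1)) = n" "\<not> s+n \<le> n-1" "n-(n-1) = 1" using n1 by auto
  then have "f (s+n) ((n-1)*m+t) = (\<Sum>i<n. \<Sum>r<p. f (s+n-1-i) (n*m + ((n-1)*p + r)) * B (Suc i) $$ (r,t))"
    using annihilator_zeta_unrolled[of "s+n" "n-1" t] s t n1 by simp
  also have "\<dots> = (\<Sum>i<n. \<Sum>r<p. f (s+(n - Suc i)) (n*m + ((n-1)*p + r)) * B (n-(n - Suc i)) $$ (r,t))"
    by (intro sum.cong refl) (use n1 in \<open>auto simp: Suc_diff_Suc\<close>)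
  also have "\<dots> = (\<Sum>i<n. \<Sum>r<p. f (s+i) (n*m + ((n-1)*p + r)) * B (n-i) $$ (r,t))"
    by (rule sum.nat_diff_reindex)
  finally show ?thesis using f_B_Mf[OF _ t, of "s+n"] s by simp
qed

lemma annihilator_output_recurrence:
  assumes r: "r < p"
  shows "f (s+n) (n*m + ((n-1)*p + r))
       = - (\<Sum>i<n. \<Sum>r'<p. f (s+i) (n*m + ((n-1)*p + r')) * A (n-i) $$ (r',r))"
proof -
  have "min (s+n) (Suc (n-1)) = n" "\<not> s+n \<le> n-1" "n-(n-1) = 1" using n1 by auto
  then have "f (s+n) (n*m + ((n-1)*p + r))
      = (\<Sum>i<n. \<Sum>r'<p. f (s+n-1-i) (n*m + ((n-1)*p + r')) * (- A (Suc i) $$ (r',r)))"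
    using annihilator_mu_unrolled[of "n-1" r "s+n"] r n1 by simp
  also have "\<dots> = (\<Sum>i<n. \<Sum>r'<p. f (s+(n - Suc i)) (n*m + ((n-1)*p + r')) * (- A (n-(n - Suc i)) $$ (r',r)))"
    by (intro sum.cong refl) (use n1 in \<open>auto simp: Suc_diff_Suc\<close>)
  also have "\<dots> = (\<Sum>i<n. \<Sum>r'<p. f (s+i) (n*m + ((n-1)*p + r')) * (- A (n-i) $$ (r',r)))"
    by (rule sum.nat_diff_reindex)
  finally show ?thesis by (simp add: sum_negf)
qed

lemma annihilator_initial_eq_zero:
  assumes out: "\<And>u r. u < n \<Longrightarrow> r < p \<Longrightarrow> f u (n*m + ((n-1)*p + r)) = 0"
    and m1: "m \<ge> 1" and i: "i < n*m + p*n"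
  shows "f 0 i = 0"
proof (cases "i < n*m")
  case True
  define b t where "b = i div m" and "t = i mod m"
  have t: "t < m" and b: "b < n" and ibt: "i = b*m+t"
    unfolding b_def t_def using m1 True by (simp_all add: less_mult_imp_div_less)
  have "n \<le> n*m" using m1 by simp
  then have k: "n-1-b < n*m + p*n" "n-1-b \<le> n*m + p*n" using b by linarith+
  have e: "n-1-b \<le> n-1" "n-1-(n-1-b) = b" "min (n-1-b) n = n-1-b" using b by auto
  have "f (n-1-b) ((n-1)*m+t) = f 0 (b*m+t)
      + (\<Sum>i<min (n-1-b) n. \<Sum>r<p. f (n-1-b-1-i) (n*m + ((n-1)*p + r)) * B (Suc i) $$ (r,t))"
    using annihilator_zeta_unrolled[OF k(2) _ t, of "n-1"] n1 b e by simp
  also have "(\<Sum>i<min (n-1-b) n. \<Sum>r<p. f (n-1-b-1-i) (n*m + ((n-1)*p + r)) * B (Suc i) $$ (r,t)) = 0"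
    using out n1 by (intro sum.neutral) auto
  finally have "f (n-1-b) ((n-1)*m+t) = f 0 (b*m+t)" by simp
  then show ?thesis using f_B_Mf[OF k(1) t] ibt by simp
next
  case False
  define b r where "b = (i - n*m) div p" and "r = (i - n*m) mod p"
  have i': "i - n*m < p*n" using i False by simp
  then have p0: "0 < p" by (cases p) auto
  have r: "r < p" and b: "b < n" and ibr: "i = n*m+(b*p+r)"
    unfolding b_def r_def using p0 i' False by (simp_all add: less_mult_imp_div_less mult.commute)
  have e: "n-1-b \<le> n-1" "n-1-(n-1-b) = b" "min (n-1-b) n = n-1-b" using b by auto
  have "f (n-1-b) (n*m + ((n-1)*p + r)) = f 0 (n*m+(b*p+r))
      + (\<Sum>i<min (n-1-b) n. \<Sum>r'<p. f (n-1-b-1-i) (n*m + ((n-1)*p + r')) * (- A (Suc i) $$ (r',r)))"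
    using annihilator_mu_unrolled[of "n-1" r "n-1-b"] n1 b r e by simp
  also have "(\<Sum>i<min (n-1-b) n. \<Sum>r'<p. f (n-1-b-1-i) (n*m + ((n-1)*p + r')) * (- A (Suc i) $$ (r',r))) = 0"
    using out n1 by (intro sum.neutral) auto
  finally have "f (n-1-b) (n*m + ((n-1)*p + r)) = f 0 (n*m+(b*p+r))" by simp
  then show ?thesis using out[of "n-1-b" r] b r ibr by simp
qed

end

lemma A_Mf_annihilator_left_iterate:
  fixes w :: "real vec"
  assumes n1: "n \<ge> 1"
    and orth: "\<forall>j<(n*m + p*n)*m. (\<Sum>i<n*m + p*n. w $ i * ctrb_mat (A_Mf n m p A B c) (B_Mf n m p) $$ (i,j)) = 0"
  shows "A_Mf_annihilator n m p A B c (left_iterate (A_Mf n m p A B c) (n*m + p*n) (\<lambda>i. w $ i))"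
proof
  let ?N = "n*m + p*n" and ?AA = "A_Mf n m p A B c" and ?BB = "B_Mf n m p"
  let ?f = "left_iterate ?AA ?N (\<lambda>i. w $ i)"
  have AA: "?AA \<in> carrier_mat ?N ?N" and BB: "?BB \<in> carrier_mat ?N m"
    by (rule A_Mf_carrier_mat, rule B_Mf_carrier_mat)
  show f_Suc: "?f (Suc k) j = (\<Sum>i<?N. ?f k i * ?AA $$ (i,j))" for k j by simp
  fix k l assume k: "k < ?N" and l: "l < m"
  have "?f k ((n-1)*m+l) = (\<Sum>i<?N. ?f k i * ?BB $$ (i,l))"
    using sum_mult_B_Mf_col[OF n1 l, of "?f k" p] by simp
  also have "\<dots> = (\<Sum>i<?N. ?f 0 i * (?AA ^\<^sub>m k * ?BB) $$ (i,l))"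
    by (rule sum_mult_iterate_eq_mat_pow[where f="left_iterate ?AA ?N (\<lambda>i. w $ i)", OF AA f_Suc BB l])
  also have "\<dots> = (\<Sum>i<?N. w $ i * ctrb_mat ?AA ?BB $$ (i, k*m+l))"
    using ctrb_mat_index[OF AA BB _ k l] by simp
  finally show "?f k ((n-1)*m+l) = 0" using orth block_index_less[OF k l] by simp
qed (rule n1)

lemma (in io_realization) A_Mf_annihilator_eq_zero:
  assumes reach: "reachable_pair Ab Bb" and obs: "mat_rank (obs_mat Cb Ab n) = p*n"
    and m1: "m \<ge> 1" and "A_Mf_annihilator n m p A B c f"
    and i: "i < n*m + p*n"
  shows "f 0 i = 0"
proof -
  interpret A_Mf_annihilator n m p A B c f by fact
  have "n \<le> n*m" using m1 by simp
  then have markov: "(\<Sum>i<n. \<Sum>r<p. f (s+i) (n*m + ((n-1)*p + r)) * B (n-i) $$ (r,t)) = 0"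
    if "s < p*n" "t < m" for s t
  proof -
    have "s + n < n*m + p*n" using that \<open>n \<le> n*m\<close> by linarith
    then show ?thesis using annihilator_output_markov that(2) by blast
  qed
  have "f u (n*m + ((n-1)*p + r)) = 0" if "u < n" "r < p" for u r
    by (rule AR_sequence_eq_zero[OF reach obs, where \<beta>="\<lambda>k r. f k (n*m + ((n-1)*p + r))",
          OF annihilator_output_recurrence markov that])
  then show ?thesis by (rule annihilator_initial_eq_zero[OF _ m1 i])
qed

lemma reachable_A_Mf_B_Mf:
  fixes n m p :: nat and A B :: "nat \<Rightarrow> real mat" and c :: "nat \<Rightarrow> real"
  assumes n1: "n \<ge> 1" and m1: "m \<ge> 1"
    and Ak: "\<forall>i\<in>{1..n}. A i \<in> carrier_mat p p"
    and as: "assumption_1' n m p A B"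
  shows "reachable_pair (A_Mf n m p A B c) (B_Mf n m p)"
proof -
  obtain Ab Bb Cb where Ab: "Ab \<in> carrier_mat (p*n) (p*n)" and Bb: "Bb \<in> carrier_mat (p*n) m"
    and Cb: "Cb \<in> carrier_mat p (p*n)" and io: "io_description n m p A B Ab Bb Cb"
    and reach: "reachable_pair Ab Bb" and obs: "mat_rank (obs_mat Cb Ab n) = p*n"
    using as unfolding assumption_1'_def by blast
  interpret io_realization n m p A B Ab Bb Cb
    using io Ab Bb Cb Ak n1 by unfold_locales
  let ?N = "n*m + p*n" and ?AA = "A_Mf n m p A B c" and ?BB = "B_Mf n m p"
  have AA: "?AA \<in> carrier_mat ?N ?N" and BB: "?BB \<in> carrier_mat ?N m"
    by (rule A_Mf_carrier_mat, rule B_Mf_carrier_mat)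
  have "vec_space.rank ?N (ctrb_mat ?AA ?BB) = ?N"
  proof (rule rank_eq_dim_row_if_left_kernel_trivial[OF ctrb_mat_carrier[OF AA BB]])
    fix w :: "real vec"
    assume w: "w \<in> carrier_vec ?N" and "\<forall>j<?N*m. (\<Sum>i<?N. w $ i * ctrb_mat ?AA ?BB $$ (i,j)) = 0"
    then have "left_iterate ?AA ?N (\<lambda>i. w $ i) 0 i = 0" if "i < ?N" for i
      using A_Mf_annihilator_eq_zero[OF reach obs m1 A_Mf_annihilator_left_iterate[OF n1] that] by blast
    then show "w = 0\<^sub>v ?N" using w by (intro eq_vecI) auto
  qed
  then show ?thesis
    unfolding reachable_pair_def mat_rank_def using AA BB ctrb_mat_carrier[OF AA BB]
    by simp
qed

section \<open>Solutions of linear integral equations are matrix exponentials\<close>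

lemma has_integral_power_div_fact:
  fixes t :: real assumes t: "0 \<le> t"
  shows "((\<lambda>s. s^k / fact k) has_integral t^Suc k / fact (Suc k)) {0..t}"
proof -
  have "((\<lambda>s. s^k / fact k) has_integral ((\<lambda>s. s^Suc k / fact (Suc k)) t - (\<lambda>s. s^Suc k / fact (Suc k)) 0)) {0..t}"
  proof (rule fundamental_theorem_of_calculus[OF t])
    fix x :: real assume "x \<in> {0..t}"
    have "((\<lambda>s. s^Suc k / fact (Suc k)) has_real_derivative (real (Suc k) * x^k / fact (Suc k))) (at x within {0..t})"
      using DERIV_cdivide[OF DERIV_pow[of "Suc k" x "{0..t}"], of "fact (Suc k)"] by simp
    moreover have "real (Suc k) * x^k / fact (Suc k) = x^k / fact k"
      by simp
    ultimately show "((\<lambda>s. s^Suc k / fact (Suc k)) has_vector_derivative x^k / fact k) (at x within {0..t})"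
      by (simp add: has_real_derivative_iff_has_vector_derivative)
  qed
  then show ?thesis by simp
qed

lemma pow_mat_mult_comm:
  fixes F :: "real mat"
  assumes F: "F \<in> carrier_mat d d"
  shows "F ^\<^sub>m k * F = F * F ^\<^sub>m k"
proof (induct k)
  case 0 then show ?case using F by simp
next
  case (Suc k)
  have "F ^\<^sub>m Suc k * F = (F ^\<^sub>m k * F) * F" by simp
  also have "\<dots> = (F * F ^\<^sub>m k) * F" using Suc by simp
  also have "\<dots> = F * (F ^\<^sub>m k * F)" using F by (simp add: assoc_mult_mat[of _ d d _ d _ d])
  finally show ?case by simp
qed

definition exp_partial_sum :: "real mat \<Rightarrow> real vec \<Rightarrow> nat \<Rightarrow> real \<Rightarrow> nat \<Rightarrow> real" where
  "exp_partial_sum F x0 N t i = (\<Sum>k<N. t^k / fact k * (F ^\<^sub>m k *\<^sub>v x0) $ i)"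

context
  fixes F :: "real mat" and x0 :: "real vec" and d :: nat
  assumes F: "F \<in> carrier_mat d d" and x0: "x0 \<in> carrier_vec d"
begin

lemma sum_mult_exp_partial_sum:
  assumes i: "i < d"
  shows "(\<Sum>l<d. F $$ (i,l) * exp_partial_sum F x0 N s l) = (\<Sum>k<N. s^k / fact k * (F ^\<^sub>m Suc k *\<^sub>v x0) $ i)"
proof -
  have e: "(\<Sum>l<d. F $$ (i,l) * (F ^\<^sub>m k *\<^sub>v x0) $ l) = (F ^\<^sub>m Suc k *\<^sub>v x0) $ i" for k
  proof -
    have "(\<Sum>l<d. F $$ (i,l) * (F ^\<^sub>m k *\<^sub>v x0) $ l) = (F *\<^sub>v (F ^\<^sub>m k *\<^sub>v x0)) $ i"
      by (rule index_mult_mat_vec_lessThan[OF F mult_mat_vec_carrier[OF pow_carrier_mat[OF F] x0] i, symmetric])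
    also have "\<dots> = ((F * F ^\<^sub>m k) *\<^sub>v x0) $ i"
      using assoc_mult_mat_vec[OF F pow_carrier_mat[OF F] x0] by simp
    finally have "(\<Sum>l<d. F $$ (i,l) * (F ^\<^sub>m k *\<^sub>v x0) $ l) = ((F * F ^\<^sub>m k) *\<^sub>v x0) $ i" .
    then show ?thesis using pow_mat_mult_comm[OF F, of k] by simp
  qed
  have "(\<Sum>l<d. F $$ (i,l) * exp_partial_sum F x0 N s l)
      = (\<Sum>k<N. \<Sum>l<d. s^k / fact k * (F $$ (i,l) * (F ^\<^sub>m k *\<^sub>v x0) $ l))"
    unfolding exp_partial_sum_def by (simp add: sum_distrib_left mult.left_commute sum.swap[of _ "{..<d}"])
  then show ?thesis by (simp only: sum_distrib_left[symmetric] e)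
qed

lemma exp_partial_sum_Suc:
  assumes t: "0 \<le> t" and i: "i < d"
  shows "exp_partial_sum F x0 (Suc N) t i = x0 $ i + integral {0..t} (\<lambda>s. \<Sum>l<d. F $$ (i,l) * exp_partial_sum F x0 N s l)"
proof -
  have "((\<lambda>s. \<Sum>k<N. s^k / fact k * (F ^\<^sub>m Suc k *\<^sub>v x0) $ i) has_integral
        (\<Sum>k<N. t^Suc k / fact (Suc k) * (F ^\<^sub>m Suc k *\<^sub>v x0) $ i)) {0..t}"
    by (intro has_integral_sum finite_lessThan has_integral_mult_left has_integral_power_div_fact[OF t])
  then have "integral {0..t} (\<lambda>s. \<Sum>l<d. F $$ (i,l) * exp_partial_sum F x0 N s l)
      = (\<Sum>k<N. t^Suc k / fact (Suc k) * (F ^\<^sub>m Suc k *\<^sub>v x0) $ i)"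
    using sum_mult_exp_partial_sum[OF i] by (simp add: integral_unique)
  moreover have "exp_partial_sum F x0 (Suc N) t i = x0 $ i + (\<Sum>k<N. t^Suc k / fact (Suc k) * (F ^\<^sub>m Suc k *\<^sub>v x0) $ i)"
    unfolding exp_partial_sum_def sum.lessThan_Suc_shift using F x0 i by simp
  ultimately show ?thesis by simp
qed

context
  fixes K :: real
  assumes K: "\<And>l. l < d \<Longrightarrow> (\<Sum>i<d. \<bar>F $$ (i,l)\<bar>) \<le> K" and K1: "1 \<le> K"
begin

lemma abs_pow_mat_index_le:
  assumes "i < d" "j < d"
  shows "\<bar>(F ^\<^sub>m k) $$ (i,j)\<bar> \<le> K^k"
  using assms(2)
proof (induct k arbitrary: j)
  case 0 then show ?case using F assms(1) by simp
next
  case (Suc k)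
  have "(F ^\<^sub>m Suc k) $$ (i,j) = (\<Sum>l<d. (F ^\<^sub>m k) $$ (i,l) * F $$ (l,j))"
    using index_mult_mat_lessThan[of "F ^\<^sub>m k" d d F d i j] F Suc.prems assms(1) by simp
  also have "\<bar>\<dots>\<bar> \<le> (\<Sum>l<d. \<bar>(F ^\<^sub>m k) $$ (i,l)\<bar> * \<bar>F $$ (l,j)\<bar>)"
    by (rule order.trans[OF sum_abs]) (simp add: abs_mult)
  also have "\<dots> \<le> (\<Sum>l<d. K^k * \<bar>F $$ (l,j)\<bar>)"
    using Suc by (intro sum_mono mult_right_mono) auto
  also have "\<dots> = K^k * (\<Sum>l<d. \<bar>F $$ (l,j)\<bar>)" by (simp add: sum_distrib_left)
  also have "\<dots> \<le> K^k * K" using K[OF Suc.prems] K1 by (intro mult_left_mono) auto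
  finally show ?case by (simp add: mult.commute)
qed

lemma exp_partial_sum_tendsto_mat_exp:
  assumes T: "0 \<le> T" and i: "i < d"
  shows "(\<lambda>N. exp_partial_sum F x0 N T i) \<longlonglongrightarrow> (mat_exp F T *\<^sub>v x0) $ i"
proof -
  have summ: "summable (\<lambda>k. T^k / fact k * (F ^\<^sub>m k) $$ (i,j))" if j: "j < d" for j
  proof (rule summable_comparison_test'[OF summable_exp[of "K*T"]])
    fix k :: nat
    have "norm (T^k / fact k * (F ^\<^sub>m k) $$ (i,j)) = T^k / fact k * \<bar>(F ^\<^sub>m k) $$ (i,j)\<bar>"
      using T by (simp add: abs_mult)
    also have "\<dots> \<le> T^k / fact k * K^k"
      using abs_pow_mat_index_le[OF i j] T by (intro mult_left_mono) auto
    finally show "norm (T^k / fact k * (F ^\<^sub>m k) $$ (i,j)) \<le> inverse (fact k) * (K*T)^k"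
      by (simp add: power_mult_distrib divide_inverse mult_ac)
  qed
  have partial: "exp_partial_sum F x0 N T i = (\<Sum>j<d. x0 $ j * (\<Sum>k<N. T^k / fact k * (F ^\<^sub>m k) $$ (i,j)))" for N
  proof -
    have "exp_partial_sum F x0 N T i = (\<Sum>k<N. \<Sum>j<d. x0 $ j * (T^k / fact k * (F ^\<^sub>m k) $$ (i,j)))"
      unfolding exp_partial_sum_def using index_mult_mat_vec_lessThan[of "F ^\<^sub>m k" d d x0 i for k] F x0 i
      by (simp add: sum_distrib_left mult.commute mult.left_commute)
    then show ?thesis by (simp add: sum.swap[of _ "{..<N}"] sum_distrib_left)
  qed
  have "(mat_exp F T *\<^sub>v x0) $ i = (\<Sum>j<d. mat_exp F T $$ (i,j) * x0 $ j)"
    by (rule index_mult_mat_vec_lessThan[OF _ x0 i]) (use F in \<open>simp add: mat_exp_def\<close>)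
  also have "\<dots> = (\<Sum>j<d. x0 $ j * (\<Sum>k. T^k / fact k * (F ^\<^sub>m k) $$ (i,j)))"
    using F i unfolding mat_exp_def by (intro sum.cong refl) (auto simp: mult.commute)
  finally have exp: "(mat_exp F T *\<^sub>v x0) $ i = (\<Sum>j<d. x0 $ j * (\<Sum>k. T^k / fact k * (F ^\<^sub>m k) $$ (i,j)))" .
  show ?thesis
    unfolding partial exp by (intro tendsto_sum tendsto_mult_left summable_LIMSEQ summ) auto
qed

context
  fixes y :: "real \<Rightarrow> nat \<Rightarrow> real" and T :: real
  assumes cont: "\<And>i. i < d \<Longrightarrow> continuous_on {0..T} (\<lambda>s. y s i)"
    and eq: "\<And>t i. t \<in> {0..T} \<Longrightarrow> i < d \<Longrightarrow> y t i = x0 $ i + integral {0..t} (\<lambda>s. \<Sum>l<d. F $$ (i,l) * y s l)"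
begin

lemma continuous_on_exp_partial_sum_error:
  "continuous_on {0..T} (\<lambda>s. y s i - exp_partial_sum F x0 N s i)" if "i < d"
  using cont[OF that] unfolding exp_partial_sum_def by (intro continuous_intros) auto

lemma exp_partial_sum_error_Suc:
  assumes t: "t \<in> {0..T}" and i: "i < d"
  shows "y t i - exp_partial_sum F x0 (Suc N) t i
    = integral {0..t} (\<lambda>s. \<Sum>l<d. F $$ (i,l) * (y s l - exp_partial_sum F x0 N s l))"
proof -
  have sub: "{0..t} \<subseteq> {0..T}" using t by auto
  have i1: "(\<lambda>s. \<Sum>l<d. F $$ (i,l) * y s l) integrable_on {0..t}"
    using continuous_on_subset[OF cont sub] by (intro integrable_continuous_interval continuous_intros) auto
  have i2: "(\<lambda>s. \<Sum>l<d. F $$ (i,l) * exp_partial_sum F x0 N s l) integrable_on {0..t}"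
    unfolding exp_partial_sum_def by (intro integrable_continuous_interval continuous_intros) auto
  have "y t i - exp_partial_sum F x0 (Suc N) t i
      = integral {0..t} (\<lambda>s. \<Sum>l<d. F $$ (i,l) * y s l) - integral {0..t} (\<lambda>s. \<Sum>l<d. F $$ (i,l) * exp_partial_sum F x0 N s l)"
    using eq[OF t i] exp_partial_sum_Suc[of t i N] t i by simp
  also have "\<dots> = integral {0..t} (\<lambda>s. \<Sum>l<d. F $$ (i,l) * (y s l - exp_partial_sum F x0 N s l))"
    by (simp add: integral_diff[OF i1 i2, symmetric] sum_subtractf right_diff_distrib)
  finally show ?thesis .
qed

lemma exp_partial_sum_error_bound:
  assumes M: "\<And>s. s \<in> {0..T} \<Longrightarrow> (\<Sum>i<d. \<bar>y s i\<bar>) \<le> M"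
  shows "t \<in> {0..T} \<Longrightarrow> (\<Sum>i<d. \<bar>y t i - exp_partial_sum F x0 N t i\<bar>) \<le> M * K^N * (t^N / fact N)"
proof (induct N arbitrary: t)
  case 0
  then show ?case using M by (simp add: exp_partial_sum_def)
next
  case (Suc N)
  let ?g = "\<lambda>i s. \<Sum>l<d. F $$ (i,l) * (y s l - exp_partial_sum F x0 N s l)"
  have t0: "0 \<le> t" and sub: "{0..t} \<subseteq> {0..T}" using Suc.prems by auto
  have gc: "continuous_on {0..t} (?g i)" for i
    using continuous_on_subset[OF continuous_on_exp_partial_sum_error sub]
    by (intro continuous_on_sum continuous_on_mult_left) auto
  have gi: "?g i integrable_on {0..t}" for i
    by (rule integrable_continuous_interval[OF gc])
  have gai: "(\<lambda>s. \<bar>?g i s\<bar>) integrable_on {0..t}" for i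
    by (rule integrable_continuous_interval[OF continuous_on_rabs[OF gc]])
  have "(\<Sum>i<d. \<bar>y t i - exp_partial_sum F x0 (Suc N) t i\<bar>) \<le> (\<Sum>i<d. integral {0..t} (\<lambda>s. \<bar>?g i s\<bar>))"
    using exp_partial_sum_error_Suc[OF Suc.prems] integral_norm_bound_integral[OF gi gai]
    by (intro sum_mono) auto
  also have "\<dots> = integral {0..t} (\<lambda>s. \<Sum>i<d. \<bar>?g i s\<bar>)"
    by (rule integral_sum[symmetric]) (use gai in auto)
  also have "\<dots> \<le> integral {0..t} (\<lambda>s. M * K^Suc N * (s^N / fact N))"
  proof (rule integral_le)
    show "(\<lambda>s. \<Sum>i<d. \<bar>?g i s\<bar>) integrable_on {0..t}" using gai by (intro integrable_sum) auto
    show "(\<lambda>s. M * K^Suc N * (s^N / fact N)) integrable_on {0..t}"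
      using has_integral_power_div_fact[OF t0, of N] by (intro integrable_on_mult_right) (auto simp: has_integral_integrable)
    fix s assume s: "s \<in> {0..t}"
    have "(\<Sum>i<d. \<bar>?g i s\<bar>) \<le> (\<Sum>i<d. \<Sum>l<d. \<bar>F $$ (i,l)\<bar> * \<bar>y s l - exp_partial_sum F x0 N s l\<bar>)"
      by (intro sum_mono order.trans[OF sum_abs]) (simp add: abs_mult)
    also have "\<dots> = (\<Sum>l<d. (\<Sum>i<d. \<bar>F $$ (i,l)\<bar>) * \<bar>y s l - exp_partial_sum F x0 N s l\<bar>)"
      by (subst sum.swap) (simp add: sum_distrib_right)
    also have "\<dots> \<le> K * (\<Sum>l<d. \<bar>y s l - exp_partial_sum F x0 N s l\<bar>)"
      unfolding sum_distrib_left using K by (intro sum_mono mult_right_mono) auto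
    also have "\<dots> \<le> K * (M * K^N * (s^N / fact N))"
      using Suc.hyps[of s] s sub K1 by (intro mult_left_mono) auto
    finally show "(\<Sum>i<d. \<bar>?g i s\<bar>) \<le> M * K^Suc N * (s^N / fact N)" by (simp add: mult_ac)
  qed
  also have "\<dots> = M * K^Suc N * integral {0..t} (\<lambda>s. s^N / fact N)"
    by (rule integral_mult_right)
  also have "\<dots> = M * K^Suc N * (t^Suc N / fact (Suc N))"
    by (simp only: integral_unique[OF has_integral_power_div_fact[OF t0, of N]])
  finally show ?case .
qed

end

end

end

lemma integral_equation_solution_eq_mat_exp:
  fixes F :: "real mat" and x0 :: "real vec" and y :: "real \<Rightarrow> nat \<Rightarrow> real"
  assumes F: "F \<in> carrier_mat d d" and x0: "x0 \<in> carrier_vec d" and T: "0 \<le> T"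
    and cont: "\<And>i. i < d \<Longrightarrow> continuous_on {0..T} (\<lambda>s. y s i)"
    and eq: "\<And>t i. t \<in> {0..T} \<Longrightarrow> i < d \<Longrightarrow> y t i = x0 $ i + integral {0..t} (\<lambda>s. \<Sum>l<d. F $$ (i,l) * y s l)"
    and i: "i < d"
  shows "y T i = (mat_exp F T *\<^sub>v x0) $ i"
proof -
  define K where "K = 1 + (\<Sum>i<d. \<Sum>j<d. \<bar>F $$ (i,j)\<bar>)"
  have K1: "1 \<le> K" unfolding K_def by (simp add: sum_nonneg)
  have K: "(\<Sum>i<d. \<bar>F $$ (i,l)\<bar>) \<le> K" if "l < d" for l
  proof -
    have "(\<Sum>i<d. \<bar>F $$ (i,l)\<bar>) \<le> (\<Sum>i<d. \<Sum>j<d. \<bar>F $$ (i,j)\<bar>)"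
      using that by (intro sum_mono member_le_sum) auto
    then show ?thesis unfolding K_def by simp
  qed
  obtain M where M: "\<And>s. s \<in> {0..T} \<Longrightarrow> (\<Sum>i<d. \<bar>y s i\<bar>) \<le> M"
  proof -
    have "continuous_on {0..T} (\<lambda>s. \<Sum>i<d. \<bar>y s i\<bar>)" using cont by (intro continuous_intros) auto
    then obtain x where "x \<in> {0..T}" "\<forall>s\<in>{0..T}. (\<Sum>i<d. \<bar>y s i\<bar>) \<le> (\<Sum>i<d. \<bar>y x i\<bar>)"
      using continuous_attains_sup[of "{0..T}" "\<lambda>s. \<Sum>i<d. \<bar>y s i\<bar>"] T by auto
    then show ?thesis using that by blast
  qed
  have "(\<lambda>N. y T i - exp_partial_sum F x0 N T i) \<longlonglongrightarrow> 0"
  proof (rule Lim_null_comparison)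
    show "\<forall>\<^sub>F N in sequentially. norm (y T i - exp_partial_sum F x0 N T i) \<le> M * (inverse (fact N) * (K*T)^N)"
    proof (rule always_eventually, rule allI)
      fix N
      have "norm (y T i - exp_partial_sum F x0 N T i) \<le> (\<Sum>i<d. \<bar>y T i - exp_partial_sum F x0 N T i\<bar>)"
        using i member_le_sum[of i "{..<d}" "\<lambda>i. \<bar>y T i - exp_partial_sum F x0 N T i\<bar>"] by simp
      also have "\<dots> \<le> M * K^N * (T^N / fact N)"
        using exp_partial_sum_error_bound[OF F x0 K K1 cont eq M] T by simp
      finally show "norm (y T i - exp_partial_sum F x0 N T i) \<le> M * (inverse (fact N) * (K*T)^N)"
        by (simp add: power_mult_distrib divide_inverse mult_ac)
    qed
    show "(\<lambda>N. M * (inverse (fact N) * (K*T)^N)) \<longlonglongrightarrow> 0"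
      using tendsto_mult_right_zero[OF summable_LIMSEQ_zero[OF summable_exp[of "K*T"]], of M] by simp
  qed
  then have "(\<lambda>N. exp_partial_sum F x0 N T i + (y T i - exp_partial_sum F x0 N T i)) \<longlonglongrightarrow> (mat_exp F T *\<^sub>v x0) $ i + 0"
    by (intro tendsto_add exp_partial_sum_tendsto_mat_exp[OF F x0 K K1 T i])
  then show ?thesis by (simp add: LIMSEQ_const_iff)
qed

section \<open>The filtered system\<close>

definition bezoutian :: "nat \<Rightarrow> (nat \<Rightarrow> real) \<Rightarrow> (nat \<Rightarrow> real) \<Rightarrow> nat \<Rightarrow> nat \<Rightarrow> real" where
  "bezoutian n cc G k j = (\<Sum>i\<le>k. if k+j+1-i \<le> n then cc (n-i) * G (n-(k+j+1-i)) - cc (n-(k+j+1-i)) * G (n-i) else 0)"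

context
  fixes n :: nat and cc G :: "nat \<Rightarrow> real"
  assumes n1: "n \<ge> 1"
begin

lemma bezoutian_last_col:
  assumes k: "k < n"
  shows "bezoutian n cc G k (n-1) = cc (n-k) * G 0 - cc 0 * G (n-k)"
proof -
  have "bezoutian n cc G k (n-1) = (\<Sum>i\<le>k. if i = k then cc (n-k) * G 0 - cc 0 * G (n-k) else 0)"
    unfolding bezoutian_def using n1 k by (intro sum.cong refl) auto
  also have "\<dots> = cc (n-k) * G 0 - cc 0 * G (n-k)" by simp
  finally show ?thesis .
qed

lemma bezoutian_last_row:
  assumes j: "j < n"
  shows "bezoutian n cc G (n-1) j = cc (n-j) * G 0 - cc 0 * G (n-j)"
proof -
  define h where "h x = cc (n-j-x) * G x" for x
  have "bezoutian n cc G (n-1) j = (\<Sum>i\<le>n-1. if j \<le> i then h (i-j) - h (n - j - (i-j)) else 0)"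
    unfolding bezoutian_def h_def using n1 j by (intro sum.cong refl) (auto simp: algebra_simps)
  also have "\<dots> = (\<Sum>i\<in>{..n-1} \<inter> {i. j \<le> i}. h (i-j) - h (n - j - (i-j)))"
    by (simp only: sum.inter_restrict[OF finite_atMost] mem_Collect_eq)
  also have "{..n-1} \<inter> {i. j \<le> i} = (\<lambda>i. i + j) ` {..<n-j}"
  proof -
    have "\<And>x. x \<le> n-1 \<Longrightarrow> j \<le> x \<Longrightarrow> x \<in> (\<lambda>i. i + j) ` {..<n-j}"
    proof -
      fix x assume "x \<le> n-1" "j \<le> x"
      then have "x - j \<in> {..<n-j}" "x = (x-j) + j" using j n1 by auto
      then show "x \<in> (\<lambda>i. i + j) ` {..<n-j}" by blast
    qed
    then show ?thesis using j n1 by auto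
  qed
  also have "(\<Sum>i\<in>(\<lambda>i. i + j) ` {..<n-j}. h (i-j) - h (n - j - (i-j))) = (\<Sum>i<n-j. h i - h (n - j - i))"
    by (subst sum.reindex) (auto simp: inj_on_def)
  also have "\<dots> = h 0 - h (n-j)" by (rule sum_lessThan_reflect_telescope)
  finally show ?thesis unfolding h_def by simp
qed

lemma bezoutian_step:
  assumes k: "k < n" and j: "1 \<le> j" "j < n"
  shows "bezoutian n cc G k (j-1) = (if 1 \<le> k then bezoutian n cc G (k-1) j else 0) + (cc (n-k) * G (n-j) - cc (n-j) * G (n-k))"
proof (cases k)
  case 0
  then show ?thesis unfolding bezoutian_def using j by simp
next
  case (Suc k1)
  have "bezoutian n cc G k (j-1) = (\<Sum>i\<le>Suc k1. if k+j-i \<le> n then cc (n-i) * G (n-(k+j-i)) - cc (n-(k+j-i)) * G (n-i) else 0)"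
    unfolding bezoutian_def Suc using j by (intro sum.cong refl) auto
  also have "\<dots> = (\<Sum>i\<le>k1. if k+j-i \<le> n then cc (n-i) * G (n-(k+j-i)) - cc (n-(k+j-i)) * G (n-i) else 0)
       + (cc (n-k) * G (n-j) - cc (n-j) * G (n-k))"
    using j k Suc by simp
  also have "(\<Sum>i\<le>k1. if k+j-i \<le> n then cc (n-i) * G (n-(k+j-i)) - cc (n-(k+j-i)) * G (n-i) else 0) = bezoutian n cc G (k-1) j"
    unfolding bezoutian_def Suc by (intro sum.cong refl) auto
  finally show ?thesis using Suc by simp
qed

lemma bezoutian_first_col:
  assumes k: "1 \<le> k" "k < n"
  shows "bezoutian n cc G (k-1) 0 = cc n * G (n-k) - cc (n-k) * G n"
proof -
  define h where "h x = cc (n-x) * G (n-k+x)" for x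
  have "bezoutian n cc G (k-1) 0 = (\<Sum>i\<le>k-1. h i - h (k - i))"
    unfolding bezoutian_def h_def using k by (intro sum.cong refl) (auto simp: algebra_simps)
  also have "{..k-1} = {..<k}" using k by auto
  also have "(\<Sum>i<k. h i - h (k - i)) = h 0 - h k" by (rule sum_lessThan_reflect_telescope)
  finally show ?thesis unfolding h_def using k by simp
qed

lemma bezoutian_shift:
  assumes cc0: "cc 0 = 1" and k: "k < n" and b: "b < n"
  shows "(if 1 \<le> b then bezoutian n cc G k (b-1) else 0) - cc (n-b) * bezoutian n cc G k (n-1)
       = (if 1 \<le> k then bezoutian n cc G (k-1) b else 0) - cc (n-k) * bezoutian n cc G (n-1) b"
proof (cases "1 \<le> b")
  case True
  define X where "X = (if 1 \<le> k then bezoutian n cc G (k-1) b else 0)"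
  have e1: "bezoutian n cc G k (b-1) = X + (cc (n-k) * G (n-b) - cc (n-b) * G (n-k))"
    using bezoutian_step[OF k True b] unfolding X_def .
  have e2: "bezoutian n cc G k (n-1) = cc (n-k) * G 0 - G (n-k)" using bezoutian_last_col[OF k] cc0 by simp
  have e3: "bezoutian n cc G (n-1) b = cc (n-b) * G 0 - G (n-b)" using bezoutian_last_row[OF b] cc0 by simp
  show ?thesis unfolding X_def[symmetric] using True by (simp only: e1 e2 e3 if_True) (simp add: algebra_simps)
next
  case False
  then have b0: "b = 0" by simp
  show ?thesis
  proof (cases "1 \<le> k")
    case True
    have e1: "bezoutian n cc G (k-1) 0 = cc n * G (n-k) - cc (n-k) * G n" using bezoutian_first_col[OF True k] .
    have e2: "bezoutian n cc G k (n-1) = cc (n-k) * G 0 - G (n-k)" using bezoutian_last_col[OF k] cc0 by simp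
    have e3: "bezoutian n cc G (n-1) 0 = cc n * G 0 - G n" using bezoutian_last_row[OF b] cc0 b0 by simp
    show ?thesis using True b0 by (simp only: e1 e2 e3 if_True if_False) (simp add: algebra_simps)
  next
    case False
    then have "k = 0" by simp
    then show ?thesis using b0 bezoutian_last_col[OF k] bezoutian_last_row[OF b] cc0 by simp
  qed
qed

end

definition monic_coeff :: "(nat \<Rightarrow> real) \<Rightarrow> nat \<Rightarrow> real" where "monic_coeff c i = (if i = 0 then 1 else c i)"

text \<open>The blocks of the paper's matrices \<open>Q\<close> and \<open>P\<close> expressing \<open>x\<close> through the filter states.\<close>
definition Q_coeff :: "nat \<Rightarrow> (nat \<Rightarrow> real) \<Rightarrow> (nat \<Rightarrow> real mat) \<Rightarrow> nat \<Rightarrow> nat \<Rightarrow> nat \<Rightarrow> nat \<Rightarrow> real" where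
  "Q_coeff n c A k j r t = bezoutian n (monic_coeff c) (\<lambda>i. A_coeff A i r t) k j"

definition P_coeff :: "nat \<Rightarrow> (nat \<Rightarrow> real) \<Rightarrow> (nat \<Rightarrow> real mat) \<Rightarrow> nat \<Rightarrow> nat \<Rightarrow> nat \<Rightarrow> nat \<Rightarrow> real" where
  "P_coeff n c B k j r t = - bezoutian n (monic_coeff c) (\<lambda>i. if i = 0 then 0 else B i $$ (r,t)) k j"

lemma sum_mult_companion_shift:
  fixes P V :: "nat \<Rightarrow> real" and w :: real and c :: "nat \<Rightarrow> real"
  assumes n1: "n \<ge> 1"
  shows "(\<Sum>j<n. P j * ((if j < n-1 then V (j+1) else 0) + (if j = n-1 then w - (\<Sum>b<n. c (n-b) * V b) else 0)))
       = (\<Sum>b<n. ((if 1 \<le> b then P (b-1) else 0) - c (n-b) * P (n-1)) * V b) + P (n-1) * w"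
proof -
  obtain n1 where n: "n = Suc n1" using n1 by (cases n) auto
  have "(\<Sum>j<n. P j * ((if j < n-1 then V (j+1) else 0) + (if j = n-1 then w - (\<Sum>b<n. c (n-b) * V b) else 0)))
      = (\<Sum>j<n1. P j * V (Suc j)) + P n1 * (w - (\<Sum>b<n. c (n-b) * V b))"
    unfolding n by simp
  also have "(\<Sum>j<n1. P j * V (Suc j)) = (\<Sum>b<n. (if 1 \<le> b then P (b-1) else 0) * V b)"
    unfolding n by (subst sum.lessThan_Suc_shift) simp
  finally show ?thesis using n
    by (simp add: left_diff_distrib sum_subtractf sum_distrib_left sum_distrib_right right_diff_distrib distrib_left mult.assoc mult.left_commute)
qed

context
  fixes n :: nat and c :: "nat \<Rightarrow> real" and A B :: "nat \<Rightarrow> real mat"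
  assumes n1: "n \<ge> 1"
begin

lemma P_coeff_last_col: "k < n \<Longrightarrow> P_coeff n c B k (n-1) r t = B (n-k) $$ (r,t)"
  unfolding P_coeff_def using bezoutian_last_col[OF n1] by (simp add: monic_coeff_def)

lemma P_coeff_last_row: "j < n \<Longrightarrow> P_coeff n c B (n-1) j r t = B (n-j) $$ (r,t)"
  unfolding P_coeff_def using bezoutian_last_row[OF n1] by (simp add: monic_coeff_def)

lemma Q_coeff_last_col: "k < n \<Longrightarrow> Q_coeff n c A k (n-1) r t = c (n-k) * (if r = t then 1 else 0) - A (n-k) $$ (r,t)"
  unfolding Q_coeff_def using bezoutian_last_col[OF n1] by (simp add: monic_coeff_def A_coeff_def)

lemma Q_coeff_last_row: "j < n \<Longrightarrow> Q_coeff n c A (n-1) j r t = c (n-j) * (if r = t then 1 else 0) - A (n-j) $$ (r,t)"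
  unfolding Q_coeff_def using bezoutian_last_row[OF n1] by (simp add: monic_coeff_def A_coeff_def)

lemma P_coeff_shift: "k < n \<Longrightarrow> b < n \<Longrightarrow>
  (if 1 \<le> b then P_coeff n c B k (b-1) r t else 0) - c (n-b) * P_coeff n c B k (n-1) r t
   = (if 1 \<le> k then P_coeff n c B (k-1) b r t else 0) - c (n-k) * P_coeff n c B (n-1) b r t"
  using bezoutian_shift[OF n1, where cc="monic_coeff c" and G="\<lambda>i. if i = 0 then 0 else B i $$ (r,t)" and k=k and b=b]
  unfolding P_coeff_def by (auto simp: monic_coeff_def algebra_simps split: if_splits)

lemma Q_coeff_shift: "k < n \<Longrightarrow> b < n \<Longrightarrow>
  (if 1 \<le> b then Q_coeff n c A k (b-1) r t else 0) - c (n-b) * Q_coeff n c A k (n-1) r t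
   = (if 1 \<le> k then Q_coeff n c A (k-1) b r t else 0) - c (n-k) * Q_coeff n c A (n-1) b r t"
  using bezoutian_shift[OF n1, where cc="monic_coeff c" and G="\<lambda>i. A_coeff A i r t" and k=k and b=b]
  unfolding Q_coeff_def by (auto simp: monic_coeff_def algebra_simps split: if_splits)

end

context
  fixes n m p :: nat and c :: "nat \<Rightarrow> real" and A B :: "nat \<Rightarrow> real mat"
  assumes n1: "n \<ge> 1"
begin

lemma sum_companion_shift_coeff:
  fixes W :: "nat \<Rightarrow> nat \<Rightarrow> nat \<Rightarrow> real" and V :: "nat \<Rightarrow> nat \<Rightarrow> real" and w :: "nat \<Rightarrow> real"
  assumes shift: "\<And>b t. b < n \<Longrightarrow> (if 1 \<le> b then W k (b-1) t else 0) - c (n-b) * W k (n-1) t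
      = (if 1 \<le> k then W (k-1) b t else 0) - c (n-k) * W (n-1) b t"
  shows "(\<Sum>j<n. \<Sum>t<q. W k j t * ((if j < n-1 then V (j+1) t else 0) + (if j = n-1 then w t - (\<Sum>b<n. c (n-b) * V b t) else 0)))
    = (\<Sum>t<q. \<Sum>b<n. ((if 1 \<le> k then W (k-1) b t else 0) - c (n-k) * W (n-1) b t) * V b t) + (\<Sum>t<q. W k (n-1) t * w t)"
proof -
  have "(\<Sum>j<n. \<Sum>t<q. W k j t * ((if j < n-1 then V (j+1) t else 0) + (if j = n-1 then w t - (\<Sum>b<n. c (n-b) * V b t) else 0)))
     = (\<Sum>t<q. \<Sum>j<n. W k j t * ((if j < n-1 then V (j+1) t else 0) + (if j = n-1 then w t - (\<Sum>b<n. c (n-b) * V b t) else 0)))"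
    by (rule sum.swap)
  also have "\<dots> = (\<Sum>t<q. (\<Sum>b<n. ((if 1 \<le> b then W k (b-1) t else 0) - c (n-b) * W k (n-1) t) * V b t) + W k (n-1) t * w t)"
    by (rule sum.cong[OF refl]) (rule sum_mult_companion_shift[OF n1])
  finally show ?thesis using shift by (simp add: sum.distrib)
qed

lemma reduced_state_derivative_identity:
  fixes X Z U :: "nat \<Rightarrow> nat \<Rightarrow> real" and uu :: "nat \<Rightarrow> real"
  assumes k: "k < n" and r: "r < p"
  defines "xt \<equiv> \<lambda>k r. X k r - (\<Sum>j<n. \<Sum>t<m. P_coeff n c B k j r t * Z j t) - (\<Sum>j<n. \<Sum>t<p. Q_coeff n c A k j r t * U j t)"
  shows "((if 1 \<le> k then X (k-1) r else 0) - (\<Sum>r'<p. A (n-k) $$ (r,r') * X (n-1) r') + (\<Sum>t<m. B (n-k) $$ (r,t) * uu t))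
   - (\<Sum>j<n. \<Sum>t<m. P_coeff n c B k j r t * ((if j < n-1 then Z (j+1) t else 0) + (if j = n-1 then uu t - (\<Sum>b<n. c (n-b) * Z b t) else 0)))
   - (\<Sum>j<n. \<Sum>t<p. Q_coeff n c A k j r t * ((if j < n-1 then U (j+1) t else 0) + (if j = n-1 then X (n-1) t - (\<Sum>b<n. c (n-b) * U b t) else 0)))
   = (if 1 \<le> k then xt (k-1) r else 0) - c (n-k) * xt (n-1) r"
proof -
  have PZ: "(\<Sum>j<n. \<Sum>t<m. P_coeff n c B k j r t * ((if j < n-1 then Z (j+1) t else 0) + (if j = n-1 then uu t - (\<Sum>b<n. c (n-b) * Z b t) else 0)))
     = (\<Sum>t<m. \<Sum>b<n. ((if 1 \<le> k then P_coeff n c B (k-1) b r t else 0) - c (n-k) * P_coeff n c B (n-1) b r t) * Z b t)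
       + (\<Sum>t<m. B (n-k) $$ (r,t) * uu t)"
    unfolding P_coeff_last_col[OF n1 k, where c=c and B=B, symmetric]
    by (rule sum_companion_shift_coeff[where W="\<lambda>k j t. P_coeff n c B k j r t"]) (erule P_coeff_shift[OF n1 k])
  have "(\<Sum>t<p. (c (n-k) * (if r = t then 1 else 0) - A (n-k) $$ (r,t)) * X (n-1) t)
      = (\<Sum>t<p. (if r = t then 1 else 0) * (c (n-k) * X (n-1) t)) - (\<Sum>t<p. A (n-k) $$ (r,t) * X (n-1) t)"
    by (simp add: left_diff_distrib sum_subtractf mult.assoc mult.left_commute)
  also have "(\<Sum>t<p. (if r = t then 1 else 0) * (c (n-k) * X (n-1) t)) = c (n-k) * X (n-1) r"
    by (rule sum_lessThan_delta_mult(4)[OF r])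
  moreover have "(\<Sum>j<n. \<Sum>t<p. Q_coeff n c A k j r t * ((if j < n-1 then U (j+1) t else 0) + (if j = n-1 then X (n-1) t - (\<Sum>b<n. c (n-b) * U b t) else 0)))
     = (\<Sum>t<p. \<Sum>b<n. ((if 1 \<le> k then Q_coeff n c A (k-1) b r t else 0) - c (n-k) * Q_coeff n c A (n-1) b r t) * U b t)
       + (\<Sum>t<p. (c (n-k) * (if r = t then 1 else 0) - A (n-k) $$ (r,t)) * X (n-1) t)"
    unfolding Q_coeff_last_col[OF n1 k, where c=c and A=A, symmetric]
    by (rule sum_companion_shift_coeff[where W="\<lambda>k j t. Q_coeff n c A k j r t"]) (erule Q_coeff_shift[OF n1 k])
  ultimately have QU: "(\<Sum>j<n. \<Sum>t<p. Q_coeff n c A k j r t * ((if j < n-1 then U (j+1) t else 0) + (if j = n-1 then X (n-1) t - (\<Sum>b<n. c (n-b) * U b t) else 0)))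
     = (\<Sum>t<p. \<Sum>b<n. ((if 1 \<le> k then Q_coeff n c A (k-1) b r t else 0) - c (n-k) * Q_coeff n c A (n-1) b r t) * U b t)
       + (c (n-k) * X (n-1) r - (\<Sum>t<p. A (n-k) $$ (r,t) * X (n-1) t))"
    by simp
  have xtf: "\<And>k'. xt k' r = X k' r - (\<Sum>t<m. \<Sum>b<n. P_coeff n c B k' b r t * Z b t) - (\<Sum>t<p. \<Sum>b<n. Q_coeff n c A k' b r t * U b t)"
    unfolding xt_def by (simp add: sum.swap[of _ "{..<n}"])
  show ?thesis
  proof (cases "1 \<le> k")
    case True
    show ?thesis unfolding PZ QU xtf using True
      by (simp add: left_diff_distrib sum_subtractf sum_distrib_left mult.assoc right_diff_distrib sum_negf)
  next
    case False
    show ?thesis unfolding PZ QU xtf using False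
      by (simp add: left_diff_distrib sum_subtractf sum_distrib_left mult.assoc right_diff_distrib sum_negf)
  qed
qed

end

lemma integral_diff_double_sums:
  fixes f :: "real \<Rightarrow> real" and g h :: "nat \<Rightarrow> nat \<Rightarrow> real \<Rightarrow> real" and P Q :: "nat \<Rightarrow> nat \<Rightarrow> real"
  assumes f: "f integrable_on S"
    and g: "\<And>j t. j < n \<Longrightarrow> t < m \<Longrightarrow> g j t integrable_on S"
    and h: "\<And>j t. j < n \<Longrightarrow> t < p \<Longrightarrow> h j t integrable_on S"
  shows "integral S (\<lambda>s. f s - (\<Sum>j<n. \<Sum>t<m. P j t * g j t s) - (\<Sum>j<n. \<Sum>t<p. Q j t * h j t s))
       = integral S f - (\<Sum>j<n. \<Sum>t<m. P j t * integral S (g j t)) - (\<Sum>j<n. \<Sum>t<p. Q j t * integral S (h j t))"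
proof -
  have gi: "(\<lambda>s. \<Sum>j<n. \<Sum>t<m. P j t * g j t s) integrable_on S"
    using g by (intro integrable_sum integrable_on_mult_right) auto
  have hi: "(\<lambda>s. \<Sum>j<n. \<Sum>t<p. Q j t * h j t s) integrable_on S"
    using h by (intro integrable_sum integrable_on_mult_right) auto
  have ig: "integral S (\<lambda>s. \<Sum>j<n. \<Sum>t<m. P j t * g j t s) = (\<Sum>j<n. \<Sum>t<m. P j t * integral S (g j t))"
  proof -
    have "integral S (\<lambda>s. \<Sum>j<n. \<Sum>t<m. P j t * g j t s) = (\<Sum>j<n. integral S (\<lambda>s. \<Sum>t<m. P j t * g j t s))"
      using g by (intro integral_sum) (auto intro!: integrable_sum integrable_on_mult_right)
    also have "\<dots> = (\<Sum>j<n. \<Sum>t<m. integral S (\<lambda>s. P j t * g j t s))"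
      using g by (intro sum.cong refl integral_sum) (auto intro!: integrable_on_mult_right)
    finally show ?thesis by simp
  qed
  have ih: "integral S (\<lambda>s. \<Sum>j<n. \<Sum>t<p. Q j t * h j t s) = (\<Sum>j<n. \<Sum>t<p. Q j t * integral S (h j t))"
  proof -
    have "integral S (\<lambda>s. \<Sum>j<n. \<Sum>t<p. Q j t * h j t s) = (\<Sum>j<n. integral S (\<lambda>s. \<Sum>t<p. Q j t * h j t s))"
      using h by (intro integral_sum) (auto intro!: integrable_sum integrable_on_mult_right)
    also have "\<dots> = (\<Sum>j<n. \<Sum>t<p. integral S (\<lambda>s. Q j t * h j t s))"
      using h by (intro sum.cong refl integral_sum) (auto intro!: integrable_on_mult_right)
    finally show ?thesis by simp
  qed
  have "integral S (\<lambda>s. f s - (\<Sum>j<n. \<Sum>t<m. P j t * g j t s) - (\<Sum>j<n. \<Sum>t<p. Q j t * h j t s))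
      = integral S (\<lambda>s. f s - (\<Sum>j<n. \<Sum>t<m. P j t * g j t s)) - integral S (\<lambda>s. \<Sum>j<n. \<Sum>t<p. Q j t * h j t s)"
    by (rule integral_diff[OF integrable_diff[OF f gi] hi])
  also have "integral S (\<lambda>s. f s - (\<Sum>j<n. \<Sum>t<m. P j t * g j t s)) = integral S f - integral S (\<lambda>s. \<Sum>j<n. \<Sum>t<m. P j t * g j t s)"
    by (rule integral_diff[OF f gi])
  finally show ?thesis unfolding ig ih .
qed

lemma solves_lin_ode_carrier_vec:
  "solves_lin_ode M N x0 u x \<Longrightarrow> 0 \<le> s \<Longrightarrow> x s \<in> carrier_vec (dim_row M)"
  unfolding solves_lin_ode_def carrier_vec_def by auto

lemma solves_lin_ode_integral:
  assumes "solves_lin_ode M N x0 u x" "0 \<le> t" "i < dim_row M"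
  shows "(\<lambda>s. (M *\<^sub>v x s + N *\<^sub>v u s) $ i) integrable_on {0..t}"
    and "x t $ i = x0 $ i + integral {0..t} (\<lambda>s. (M *\<^sub>v x s + N *\<^sub>v u s) $ i)"
proof -
  have si: "set_integrable lborel {0..t} (\<lambda>s. (M *\<^sub>v x s + N *\<^sub>v u s) $ i)"
    and eq: "x t $ i = x0 $ i + (LINT s:{0..t}|lborel. (M *\<^sub>v x s + N *\<^sub>v u s) $ i)"
    using assms unfolding solves_lin_ode_def by blast+
  show "(\<lambda>s. (M *\<^sub>v x s + N *\<^sub>v u s) $ i) integrable_on {0..t}"
    by (rule set_borel_integral_eq_integral(1)[OF si])
  show "x t $ i = x0 $ i + integral {0..t} (\<lambda>s. (M *\<^sub>v x s + N *\<^sub>v u s) $ i)"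
    using eq set_borel_integral_eq_integral(2)[OF si] by simp
qed

lemma solves_lin_ode_continuous_on:
  assumes sol: "solves_lin_ode M N x0 u x" and T: "0 \<le> T" and i: "i < dim_row M"
  shows "continuous_on {0..T} (\<lambda>s. x s $ i)"
proof (rule continuous_on_eq)
  show "continuous_on {0..T} (\<lambda>t. x0 $ i + integral {0..t} (\<lambda>s. (M *\<^sub>v x s + N *\<^sub>v u s) $ i))"
    by (intro continuous_intros indefinite_integral_continuous_1 solves_lin_ode_integral(1)[OF sol T i])
  show "x0 $ i + integral {0..t} (\<lambda>s. (M *\<^sub>v x s + N *\<^sub>v u s) $ i) = x t $ i" if "t \<in> {0..T}" for t
    using solves_lin_ode_integral(2)[OF sol _ i] that by simp
qed

locale filtered_system =
  fixes n m p :: nat and A B :: "nat \<Rightarrow> real mat" and c :: "nat \<Rightarrow> real"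
    and x0 :: "real vec" and u x \<zeta> \<mu> :: "real \<Rightarrow> real vec"
  assumes n1: "n \<ge> 1" and x0: "x0 \<in> carrier_vec (p*n)"
    and u: "loc_integrable_input m u"
    and x: "solves_lin_ode (A_M n p A) (B_M n m p B) x0 u x"
    and \<zeta>: "solves_lin_ode (kron (A_r n c) (1\<^sub>m m)) (kron (B_r n) (1\<^sub>m m)) (0\<^sub>v (m * n)) u \<zeta>"
    and \<mu>: "solves_lin_ode (kron (A_r n c) (1\<^sub>m p)) (kron (B_r n) (1\<^sub>m p)) (0\<^sub>v (p * n)) (\<lambda>t. C_M n p *\<^sub>v x t) \<mu>"
begin

definition x_rhs :: "real \<Rightarrow> real vec" where
  "x_rhs s = A_M n p A *\<^sub>v x s + B_M n m p B *\<^sub>v u s"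

definition \<zeta>_rhs :: "real \<Rightarrow> real vec" where
  "\<zeta>_rhs s = kron (A_r n c) (1\<^sub>m m) *\<^sub>v \<zeta> s + kron (B_r n) (1\<^sub>m m) *\<^sub>v u s"

definition \<mu>_rhs :: "real \<Rightarrow> real vec" where
  "\<mu>_rhs s = kron (A_r n c) (1\<^sub>m p) *\<^sub>v \<mu> s + kron (B_r n) (1\<^sub>m p) *\<^sub>v (C_M n p *\<^sub>v x s)"

text \<open>The paper's \<open>x - P \<zeta> - Q \<mu>\<close>; it evolves by the transpose of \<^term>\<open>kron (A_r n c) (1\<^sub>m p)\<close>
  (lemma \<open>reduced_state_rhs\<close>), so it equals \<open>e\<^bsup>A\<^sub>r\<^sub>,\<^sub>p\<^sup>T t\<^esup> x\<^sub>0\<close>.\<close>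
definition reduced_state :: "real \<Rightarrow> nat \<Rightarrow> real" where
  "reduced_state s i = x s $ i - (\<Sum>j<n. \<Sum>t<m. P_coeff n c B (i div p) j (i mod p) t * \<zeta> s $ (j*m+t))
      - (\<Sum>j<n. \<Sum>t<p. Q_coeff n c A (i div p) j (i mod p) t * \<mu> s $ (j*p+t))"

abbreviation A_r_p_transpose :: "real mat" where
  "A_r_p_transpose \<equiv> transpose_mat (kron (A_r n c) (1\<^sub>m p))"

lemma u_carrier: "u s \<in> carrier_vec m"
  using u unfolding loc_integrable_input_def carrier_vec_def by auto

lemma x_carrier: "0 \<le> s \<Longrightarrow> x s \<in> carrier_vec (p*n)"
  using solves_lin_ode_carrier_vec[OF x] A_M_carrier_mat by (metis carrier_matD(1))

lemma \<zeta>_carrier: "0 \<le> s \<Longrightarrow> \<zeta> s \<in> carrier_vec (n*m)"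
  using solves_lin_ode_carrier_vec[OF \<zeta>] kron_A_r_carrier_mat by (metis carrier_matD(1))

lemma \<mu>_carrier: "0 \<le> s \<Longrightarrow> \<mu> s \<in> carrier_vec (p*n)"
  using solves_lin_ode_carrier_vec[OF \<mu>] kron_A_r_carrier_mat by (metis carrier_matD(1) mult.commute)

lemma x_rhs_block:
  assumes "0 \<le> s" "k < n" "r < p"
  shows "x_rhs s $ (k*p+r) = (if 1 \<le> k then x s $ ((k-1)*p+r) else 0)
    - (\<Sum>r'<p. A (n-k) $$ (r,r') * x s $ ((n-1)*p+r')) + (\<Sum>t<m. B (n-k) $$ (r,t) * u s $ t)"
  using A_M_mult_vec_block[OF x_carrier[OF assms(1)] assms(2,3), of A]
    B_M_mult_vec_block[OF u_carrier assms(2,3), of B] block_index_less[OF assms(2,3)] B_M_carrier_mat[of n m p B]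
  unfolding x_rhs_def by (simp add: mult.commute)

lemma \<zeta>_rhs_block:
  assumes "0 \<le> s" "j < n" "t < m"
  shows "\<zeta>_rhs s $ (j*m+t) = (if j < n-1 then \<zeta> s $ ((j+1)*m+t) else 0)
    + (if j = n-1 then u s $ t - (\<Sum>b<n. c (n-b) * \<zeta> s $ (b*m+t)) else 0)"
  using kron_A_r_mult_vec_block[OF \<zeta>_carrier[OF assms(1)] assms(2,3), of c]
    kron_B_r_mult_vec_block[OF u_carrier assms(2,3)] block_index_less[OF assms(2,3)] kron_B_r_carrier_mat[of n m] assms
  unfolding \<zeta>_rhs_def by auto

lemma \<mu>_rhs_block:
  assumes "0 \<le> s" "j < n" "r < p"
  shows "\<mu>_rhs s $ (j*p+r) = (if j < n-1 then \<mu> s $ ((j+1)*p+r) else 0)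
    + (if j = n-1 then x s $ ((n-1)*p+r) - (\<Sum>b<n. c (n-b) * \<mu> s $ (b*p+r)) else 0)"
proof -
  have "\<mu> s \<in> carrier_vec (n*p)" using \<mu>_carrier[OF assms(1)] by (simp add: mult.commute)
  moreover have "C_M n p *\<^sub>v x s \<in> carrier_vec p" using C_M_carrier_mat[of n p] x_carrier[OF assms(1)] by simp
  ultimately show ?thesis
    using kron_A_r_mult_vec_block[of "\<mu> s" n p j r c] kron_B_r_mult_vec_block[of "C_M n p *\<^sub>v x s" p j n r]
      C_M_mult_vec[OF x_carrier[OF assms(1)] assms(3) n1] block_index_less[OF assms(2,3)] kron_B_r_carrier_mat[of n p] assms
    unfolding \<mu>_rhs_def by auto
qed

lemma reduced_state_rhs:
  assumes s: "0 \<le> s" and k: "k < n" and r: "r < p"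
  shows "x_rhs s $ (k*p+r) - (\<Sum>j<n. \<Sum>t<m. P_coeff n c B k j r t * \<zeta>_rhs s $ (j*m+t))
      - (\<Sum>j<n. \<Sum>t<p. Q_coeff n c A k j r t * \<mu>_rhs s $ (j*p+t))
    = (\<Sum>l<p*n. A_r_p_transpose $$ (k*p+r,l) * reduced_state s l)"
proof -
  have \<zeta>': "(\<Sum>j<n. \<Sum>t<m. P_coeff n c B k j r t * \<zeta>_rhs s $ (j*m+t)) =
     (\<Sum>j<n. \<Sum>t<m. P_coeff n c B k j r t * ((if j < n-1 then \<zeta> s $ ((j+1)*m+t) else 0)
      + (if j = n-1 then u s $ t - (\<Sum>b<n. c (n-b) * \<zeta> s $ (b*m+t)) else 0)))"
    using \<zeta>_rhs_block[OF s] by (intro sum.cong refl) auto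
  have \<mu>': "(\<Sum>j<n. \<Sum>t<p. Q_coeff n c A k j r t * \<mu>_rhs s $ (j*p+t)) =
     (\<Sum>j<n. \<Sum>t<p. Q_coeff n c A k j r t * ((if j < n-1 then \<mu> s $ ((j+1)*p+t) else 0)
      + (if j = n-1 then x s $ ((n-1)*p+t) - (\<Sum>b<n. c (n-b) * \<mu> s $ (b*p+t)) else 0)))"
    using \<mu>_rhs_block[OF s] by (intro sum.cong refl) auto
  have x': "reduced_state s (k'*p+r) = x s $ (k'*p+r) - (\<Sum>j<n. \<Sum>t<m. P_coeff n c B k' j r t * \<zeta> s $ (j*m+t))
      - (\<Sum>j<n. \<Sum>t<p. Q_coeff n c A k' j r t * \<mu> s $ (j*p+t))" for k'
    using r unfolding reduced_state_def by simp
  show ?thesis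
    unfolding x_rhs_block[OF s k r] \<zeta>' \<mu>' sum_transpose_kron_A_r_row[OF k r] x'
    by (rule reduced_state_derivative_identity[OF n1 k r, where X="\<lambda>k r. x s $ (k*p+r)"
        and Z="\<lambda>j t. \<zeta> s $ (j*m+t)" and U="\<lambda>j t. \<mu> s $ (j*p+t)" and uu="\<lambda>t. u s $ t"])
qed

lemma continuous_on_reduced_state:
  assumes T: "0 \<le> T" and i: "i < p*n"
  shows "continuous_on {0..T} (\<lambda>s. reduced_state s i)"
proof -
  have "continuous_on {0..T} (\<lambda>s. \<zeta> s $ (j*m+t))" if "j < n" "t < m" for j t
    using solves_lin_ode_continuous_on[OF \<zeta> T] block_index_less[OF that] kron_A_r_carrier_mat[of n c m] by simp
  moreover have "continuous_on {0..T} (\<lambda>s. \<mu> s $ (j*p+t))" if "j < n" "t < p" for j t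
    using solves_lin_ode_continuous_on[OF \<mu> T] block_index_less[OF that] kron_A_r_carrier_mat[of n c p] by simp
  moreover have "continuous_on {0..T} (\<lambda>s. x s $ i)"
    using solves_lin_ode_continuous_on[OF x T] i A_M_carrier_mat[of n p A] by simp
  ultimately show ?thesis unfolding reduced_state_def by (intro continuous_intros) auto
qed

lemma reduced_state_integral_equation:
  assumes t: "0 \<le> t" and i: "i < p*n"
  shows "reduced_state t i = x0 $ i + integral {0..t} (\<lambda>s. \<Sum>l<p*n. A_r_p_transpose $$ (i,l) * reduced_state s l)"
proof -
  let ?P = "\<lambda>j t'. P_coeff n c B (i div p) j (i mod p) t'" and ?Q = "\<lambda>j t'. Q_coeff n c A (i div p) j (i mod p) t'"
  have dims: "dim_row (A_M n p A) = p*n" "dim_row (kron (A_r n c) (1\<^sub>m m)) = n*m"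
    "dim_row (kron (A_r n c) (1\<^sub>m p)) = n*p"
    using A_M_carrier_mat kron_A_r_carrier_mat by (metis carrier_matD(1))+
  note xI = solves_lin_ode_integral[OF x t, folded x_rhs_def, unfolded dims, OF i]
  have \<zeta>I: "(\<lambda>s. \<zeta>_rhs s $ (j*m+t')) integrable_on {0..t}"
    "\<zeta> t $ (j*m+t') = integral {0..t} (\<lambda>s. \<zeta>_rhs s $ (j*m+t'))" if "j < n" "t' < m" for j t'
    using solves_lin_ode_integral[OF \<zeta> t, folded \<zeta>_rhs_def, unfolded dims, of "j*m+t'"]
      block_index_less[OF that] by (simp_all add: mult.commute)
  have \<mu>I: "(\<lambda>s. \<mu>_rhs s $ (j*p+t')) integrable_on {0..t}"
    "\<mu> t $ (j*p+t') = integral {0..t} (\<lambda>s. \<mu>_rhs s $ (j*p+t'))" if "j < n" "t' < p" for j t'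
    using solves_lin_ode_integral[OF \<mu> t, folded \<mu>_rhs_def, unfolded dims, of "j*p+t'"]
      block_index_less[OF that] by (simp_all add: mult.commute)
  have "reduced_state t i = x0 $ i + (integral {0..t} (\<lambda>s. x_rhs s $ i)
       - (\<Sum>j<n. \<Sum>t'<m. ?P j t' * integral {0..t} (\<lambda>s. \<zeta>_rhs s $ (j*m+t')))
       - (\<Sum>j<n. \<Sum>t'<p. ?Q j t' * integral {0..t} (\<lambda>s. \<mu>_rhs s $ (j*p+t'))))"
    unfolding reduced_state_def using xI(2) \<zeta>I(2) \<mu>I(2) by simp
  also have "integral {0..t} (\<lambda>s. x_rhs s $ i)
       - (\<Sum>j<n. \<Sum>t'<m. ?P j t' * integral {0..t} (\<lambda>s. \<zeta>_rhs s $ (j*m+t')))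
       - (\<Sum>j<n. \<Sum>t'<p. ?Q j t' * integral {0..t} (\<lambda>s. \<mu>_rhs s $ (j*p+t')))
       = integral {0..t} (\<lambda>s. x_rhs s $ i - (\<Sum>j<n. \<Sum>t'<m. ?P j t' * \<zeta>_rhs s $ (j*m+t'))
          - (\<Sum>j<n. \<Sum>t'<p. ?Q j t' * \<mu>_rhs s $ (j*p+t')))"
    by (rule integral_diff_double_sums[symmetric]) (use xI(1) \<zeta>I(1) \<mu>I(1) in auto)
  also have "\<dots> = integral {0..t} (\<lambda>s. \<Sum>l<p*n. A_r_p_transpose $$ (i,l) * reduced_state s l)"
  proof (rule Henstock_Kurzweil_Integration.integral_cong)
    fix s assume "s \<in> {0..t}"
    moreover have "0 < p" using i by (cases p) auto
    then have "i = (i div p)*p + i mod p" "i div p < n" "i mod p < p"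
      using i by (auto simp: less_mult_imp_div_less mult.commute)
    ultimately show "x_rhs s $ i - (\<Sum>j<n. \<Sum>t'<m. ?P j t' * \<zeta>_rhs s $ (j*m+t'))
          - (\<Sum>j<n. \<Sum>t'<p. ?Q j t' * \<mu>_rhs s $ (j*p+t'))
        = (\<Sum>l<p*n. A_r_p_transpose $$ (i,l) * reduced_state s l)"
      using reduced_state_rhs[of s "i div p" "i mod p"] by simp
  qed
  finally show ?thesis .
qed

lemma A_r_p_transpose_carrier_mat: "A_r_p_transpose \<in> carrier_mat (p*n) (p*n)"
  using kron_A_r_carrier_mat[of n c p] by (simp add: mult.commute)

lemma reduced_state_eq_mat_exp:
  assumes "0 \<le> s" "i < p*n"
  shows "reduced_state s i = (mat_exp A_r_p_transpose s *\<^sub>v x0) $ i"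
  by (rule integral_equation_solution_eq_mat_exp[OF A_r_p_transpose_carrier_mat x0 assms(1) _ _ assms(2)])
    (use continuous_on_reduced_state reduced_state_integral_equation assms(1) in auto)

lemma reduced_state_last_block:
  assumes r: "r < p"
  shows "reduced_state s ((n-1)*p+r) = x s $ ((n-1)*p+r) - (\<Sum>j<n. \<Sum>t<m. B (n-j) $$ (r,t) * \<zeta> s $ (j*m+t))
    - ((\<Sum>j<n. c (n-j) * \<mu> s $ (j*p+r)) - (\<Sum>j<n. \<Sum>t<p. A (n-j) $$ (r,t) * \<mu> s $ (j*p+t)))"
proof -
  have "(\<Sum>j<n. \<Sum>t<p. Q_coeff n c A (n-1) j r t * \<mu> s $ (j*p+t))
      = (\<Sum>j<n. (\<Sum>t<p. (if r = t then 1 else 0) * (c (n-j) * \<mu> s $ (j*p+t))) - (\<Sum>t<p. A (n-j) $$ (r,t) * \<mu> s $ (j*p+t)))"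
    using Q_coeff_last_row[OF n1, of _ c A r]
    by (intro sum.cong refl) (simp add: left_diff_distrib sum_subtractf mult.assoc mult.left_commute)
  also have "\<dots> = (\<Sum>j<n. c (n-j) * \<mu> s $ (j*p+r)) - (\<Sum>j<n. \<Sum>t<p. A (n-j) $$ (r,t) * \<mu> s $ (j*p+t))"
    using r by (simp add: mult_if_delta sum_subtractf)
  finally show ?thesis
    using r P_coeff_last_row[OF n1, of _ c B r] unfolding reduced_state_def by simp
qed

definition augmented_rhs :: "real \<Rightarrow> real vec" where
  "augmented_rhs s = A_Mf n m p A B c *\<^sub>v (\<zeta> s @\<^sub>v \<mu> s) + B_Mf n m p *\<^sub>v u s
     + G_Mf n m p *\<^sub>v (mat_exp A_r_p_transpose s *\<^sub>v x0)"

lemma mat_exp_mult_x0_carrier: "mat_exp A_r_p_transpose s *\<^sub>v x0 \<in> carrier_vec (p*n)"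
proof -
  have "mat_exp A_r_p_transpose s \<in> carrier_mat (p*n) (p*n)"
    using A_r_p_transpose_carrier_mat unfolding mat_exp_def by auto
  then show ?thesis using x0 by simp
qed

lemma index_augmented_rhs:
  "i < n*m + p*n \<Longrightarrow> augmented_rhs s $ i = (A_Mf n m p A B c *\<^sub>v (\<zeta> s @\<^sub>v \<mu> s)) $ i + (B_Mf n m p *\<^sub>v u s) $ i
     + (G_Mf n m p *\<^sub>v (mat_exp A_r_p_transpose s *\<^sub>v x0)) $ i"
  using A_Mf_carrier_mat[of n m p A B c] B_Mf_carrier_mat[of n m p] G_Mf_carrier_mat[of n m p]
  unfolding augmented_rhs_def by simp

lemma augmented_rhs_upper:
  assumes s: "0 \<le> s" and i: "i < n*m"
  shows "augmented_rhs s $ i = \<zeta>_rhs s $ i"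
  using index_augmented_rhs[of i s] i A_Mf_mult_append_vec_upper[OF \<zeta>_carrier[OF s] \<mu>_carrier[OF s] i, of A B c]
    B_Mf_mult_vec_upper[where p=p, OF u_carrier i] G_Mf_mult_vec_upper[where m=m, OF mat_exp_mult_x0_carrier i]
    kron_B_r_carrier_mat[of n m]
  unfolding \<zeta>_rhs_def by simp

lemma augmented_rhs_lower:
  assumes s: "0 \<le> s" and b: "b < n" and r: "r < p"
  shows "augmented_rhs s $ (n*m + (b*p+r)) = \<mu>_rhs s $ (b*p+r)"
proof -
  have i: "b*p+r < p*n" using block_index_less[OF b r] by (simp add: mult.commute)
  have \<zeta>s: "\<zeta> s \<in> carrier_vec (m*n)" using \<zeta>_carrier[OF s] by (simp add: mult.commute)
  have j: "(n-1)*p+r < p*n" using block_index_less[of "n-1" n r p] n1 r by (simp add: mult.commute)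
  have "(kron (B_r n) (1\<^sub>m p) *\<^sub>v (C_M n p *\<^sub>v (mat_exp A_r_p_transpose s *\<^sub>v x0))) $ (b*p+r)
      = (if b = n-1 then reduced_state s ((n-1)*p+r) else 0)"
    using kron_B_r_mult_vec_block[OF _ b r] C_M_mult_vec[OF mat_exp_mult_x0_carrier r n1]
      reduced_state_eq_mat_exp[OF s j] C_M_carrier_mat[of n p] mat_exp_mult_x0_carrier by simp
  then have "augmented_rhs s $ (n*m + (b*p+r)) = (L_B n m p B *\<^sub>v \<zeta> s) $ (b*p+r) + (A_c n p A *\<^sub>v \<mu> s) $ (b*p+r)
      + (if b = n-1 then reduced_state s ((n-1)*p+r) else 0)"
    using index_augmented_rhs[of "n*m + (b*p+r)" s] i
      A_Mf_mult_append_vec_lower[OF \<zeta>_carrier[OF s] \<mu>_carrier[OF s] i, of A B c]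
      B_Mf_mult_vec_lower[where n=n, OF u_carrier i] G_Mf_mult_vec_lower[where m=m, OF mat_exp_mult_x0_carrier i]
    by simp
  then show ?thesis
    using \<mu>_rhs_block[OF s b r] L_B_mult_vec_block[OF \<zeta>s b r, of B] A_c_mult_vec_block[OF \<mu>_carrier[OF s] b r, of A]
      reduced_state_last_block[OF r, of s] b
    by (cases "b < n-1") auto
qed

lemma augmented_filter_equation:
  "\<forall>t\<ge>0. \<forall>i<(m + p) * n.
     set_integrable lborel {0..t}
       (\<lambda>s. (A_Mf n m p A B c *\<^sub>v (\<zeta> s @\<^sub>v \<mu> s) + B_Mf n m p *\<^sub>v u s
             + G_Mf n m p *\<^sub>v (mat_exp (transpose_mat (kron (A_r n c) (1\<^sub>m p))) s *\<^sub>v x0)) $ i)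
   \<and> (\<zeta> t @\<^sub>v \<mu> t) $ i =
     (LINT s:{0..t}|lborel.
        (A_Mf n m p A B c *\<^sub>v (\<zeta> s @\<^sub>v \<mu> s) + B_Mf n m p *\<^sub>v u s
         + G_Mf n m p *\<^sub>v (mat_exp (transpose_mat (kron (A_r n c) (1\<^sub>m p))) s *\<^sub>v x0)) $ i)"
proof (intro allI impI, fold augmented_rhs_def)
  fix t :: real and i :: nat assume t: "0 \<le> t" and i: "i < (m + p) * n"
  have "\<exists>g. (\<forall>s\<in>{0..t}. augmented_rhs s $ i = g s) \<and> set_integrable lborel {0..t} g
      \<and> (\<zeta> t @\<^sub>v \<mu> t) $ i = (LINT s:{0..t}|lborel. g s)"
  proof (cases "i < n*m")
    case True
    show ?thesis
      using augmented_rhs_upper[OF _ True] \<zeta>[unfolded solves_lin_ode_def, folded \<zeta>_rhs_def] t True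
        \<zeta>_carrier[OF t] \<mu>_carrier[OF t] kron_A_r_carrier_mat[of n c m]
      by (intro exI[of _ "\<lambda>s. \<zeta>_rhs s $ i"]) (auto simp: mult.commute)
  next
    case False
    define b r where "b = (i - n*m) div p" and "r = (i - n*m) mod p"
    have i': "i - n*m < p*n" using i False by (simp add: algebra_simps)
    then have p0: "0 < p" by (cases p) auto
    have r: "r < p" and b: "b < n" and ibr: "i = n*m + (b*p+r)"
      unfolding b_def r_def using p0 i' False by (simp_all add: less_mult_imp_div_less mult.commute)
    show ?thesis
      using augmented_rhs_lower[OF _ b r] \<mu>[unfolded solves_lin_ode_def, folded \<mu>_rhs_def] t i' ibr
        \<zeta>_carrier[OF t] \<mu>_carrier[OF t] kron_A_r_carrier_mat[of n c p]
      by (intro exI[of _ "\<lambda>s. \<mu>_rhs s $ (i - n*m)"]) (auto simp: mult.commute)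
  qed
  then obtain g where g: "\<And>s. s \<in> {0..t} \<Longrightarrow> augmented_rhs s $ i = g s"
    and "set_integrable lborel {0..t} g" "(\<zeta> t @\<^sub>v \<mu> t) $ i = (LINT s:{0..t}|lborel. g s)"
    by blast
  moreover have "set_integrable lborel {0..t} (\<lambda>s. augmented_rhs s $ i) = set_integrable lborel {0..t} g"
    by (rule set_integrable_cong) (use g in auto)
  moreover have "(LINT s:{0..t}|lborel. augmented_rhs s $ i) = (LINT s:{0..t}|lborel. g s)"
    by (rule set_lebesgue_integral_cong) (use g in auto)
  ultimately show "set_integrable lborel {0..t} (\<lambda>s. augmented_rhs s $ i)
      \<and> (\<zeta> t @\<^sub>v \<mu> t) $ i = (LINT s:{0..t}|lborel. augmented_rhs s $ i)"
    by simp
qed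
end

theorem theorem1:
  fixes n m p :: nat
    and A B :: "nat \<Rightarrow> real mat"
  assumes "n \<ge> 1" and "m \<ge> 1" and "p \<ge> 1"
    and "\<forall>i\<in>{1..n}. A i \<in> carrier_mat p p"
    and "\<forall>i\<in>{1..n}. B i \<in> carrier_mat p m"
    and "assumption_1' n m p A B"
  shows "\<forall>(c :: nat \<Rightarrow> real) (x0 :: real vec) (u :: real \<Rightarrow> real vec)
            (x :: real \<Rightarrow> real vec) (\<zeta> :: real \<Rightarrow> real vec) (\<mu> :: real \<Rightarrow> real vec).
           x0 \<in> carrier_vec (p * n) \<longrightarrow>
           loc_integrable_input m u \<longrightarrow>
           solves_lin_ode (A_M n p A) (B_M n m p B) x0 u x \<longrightarrow>
           solves_lin_ode (kron (A_r n c) (1\<^sub>m m)) (kron (B_r n) (1\<^sub>m m)) (0\<^sub>v (m * n)) u \<zeta> \<longrightarrow>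
           solves_lin_ode (kron (A_r n c) (1\<^sub>m p)) (kron (B_r n) (1\<^sub>m p)) (0\<^sub>v (p * n))
              (\<lambda>t. C_M n p *\<^sub>v x t) \<mu> \<longrightarrow>
           (\<forall>t\<ge>0. \<forall>i<(m + p) * n.
              set_integrable lborel {0..t}
                (\<lambda>s. (A_Mf n m p A B c *\<^sub>v (\<zeta> s @\<^sub>v \<mu> s) + B_Mf n m p *\<^sub>v u s
                      + G_Mf n m p *\<^sub>v (mat_exp (transpose_mat (kron (A_r n c) (1\<^sub>m p))) s *\<^sub>v x0)) $ i)
            \<and> (\<zeta> t @\<^sub>v \<mu> t) $ i =
              (LINT s:{0..t}|lborel.
                 (A_Mf n m p A B c *\<^sub>v (\<zeta> s @\<^sub>v \<mu> s) + B_Mf n m p *\<^sub>v u s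
                  + G_Mf n m p *\<^sub>v (mat_exp (transpose_mat (kron (A_r n c) (1\<^sub>m p))) s *\<^sub>v x0)) $ i))
           \<and> reachable_pair (A_Mf n m p A B c) (B_Mf n m p)"
  using filtered_system.augmented_filter_equation[OF filtered_system.intro, OF assms(1)]
    reachable_A_Mf_B_Mf[OF assms(1,2,4,6)] by blast

end
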